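(* Let $m \ge 1$ and let $TW_{m+2}'$ be the commutator subgroup of the twin group $TW_{m+2}$. Then $TW_{m+2}'$ has the following presentation. Generators: $\beta_p(j)$ for all integers $0 \le p < j \le m$. Defining relations: for all integers $j,k,t,l$ with $1 \le k \le j$, $j+2 \le t \le m$ and $3 \le l \le t-j$, $$\beta_{j-k}(j)\,\beta_{t-(j+l)}(t) = \beta_{t-(j+l)}(t)\,\beta_{j-k}(j),$$ and for all integers $j,k,t$ with $1 \le k \le j$ and $j+2 \le t \le m$, $$\beta_{t-k}(t) = \beta_{j-k}(j)^{-1}\,\beta_{t-(j+1)}(t)\,\beta_{j-k}(j).$$ Here the abstract generator $\beta_p(j)$ corresponds to the element of $TW_{m+2}$ defined in the context.
   Context: For $n \ge 2$, the twin group $TW_n$ is the group with generators $\tau_1,\dots,\tau_{n-1}$ and defining relations $\tau_i^2=1$ for all $i$, and $\tau_i\tau_j=\tau_j\tau_i$ whenever $|i-j|>1$. (For $m\ge1$, $TW_{m+2}$ is isomorphic to Grothendieck's $m$-dimensional cartographical group.) $G'$ denotes the commutator subgroup of a group $G$. For $1 \le j \le n-2$ and $0 \le p < j$, define the element $$\beta_p(j) := \tau_{j-p}\tau_{j-p+1}\cdots\tau_{j-1}\,(\tau_{j+1}\tau_j\tau_{j+1}\tau_j)\,\tau_{j-1}\cdots\tau_{j-p+1}\tau_{j-p} \in TW_n,$$ so that $\beta_0(j)=\tau_{j+1}\tau_j\tau_{j+1}\tau_j$. *)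

theory Defs
  imports "HOL-Algebra.Generated_Groups"
begin

text \<open>A word over an alphabet is a list of letters (a, e), where e = False means the
generator a and e = True means its inverse.\<close>

type_synonym 'a word = "('a \<times> bool) list"

definition words :: "'a set \<Rightarrow> 'a word set" where
  "words S = {w. \<forall>x\<in>set w. fst x \<in> S}"

definition inv_word :: "'a word \<Rightarrow> 'a word" where
  "inv_word w = rev (map (\<lambda>(a, e). (a, \<not> e)) w)"

inductive pres_eq :: "'a set \<Rightarrow> 'a word set \<Rightarrow> 'a word \<Rightarrow> 'a word \<Rightarrow> bool"
  for S :: "'a set" and R :: "'a word set" where
  refl: "w \<in> words S \<Longrightarrow> pres_eq S R w w"
| sym: "pres_eq S R u v \<Longrightarrow> pres_eq S R v u"
| trans: "pres_eq S R u v \<Longrightarrow> pres_eq S R v w \<Longrightarrow> pres_eq S R u w"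
| cancel: "\<lbrakk>a \<in> S; u \<in> words S; v \<in> words S\<rbrakk>
     \<Longrightarrow> pres_eq S R (u @ [(a, e), (a, \<not> e)] @ v) (u @ v)"
| relator: "\<lbrakk>r \<in> R; r \<in> words S; u \<in> words S; v \<in> words S\<rbrakk>
     \<Longrightarrow> pres_eq S R (u @ r @ v) (u @ v)"

definition pres_class :: "'a set \<Rightarrow> 'a word set \<Rightarrow> 'a word \<Rightarrow> 'a word set" where
  "pres_class S R w = {v. pres_eq S R w v}"

definition presented_group :: "'a set \<Rightarrow> 'a word set \<Rightarrow> 'a word set monoid" where
  "presented_group S R =
     \<lparr> carrier = pres_class S R ` words S,
       mult = (\<lambda>X Y. \<Union>x\<in>X. \<Union>y\<in>Y. pres_class S R (x @ y)),
       one = pres_class S R [] \<rparr>"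

definition gen_word :: "'a list \<Rightarrow> 'a word" where
  "gen_word xs = map (\<lambda>a. (a, False)) xs"

definition commutator_word :: "'a \<Rightarrow> 'a \<Rightarrow> 'a word" where
  "commutator_word a b = [(a, False), (b, False), (a, True), (b, True)]"

text \<open>Generators tau_1, ..., tau_(n-1), encoded by their indices.\<close>

definition TW_gens :: "nat \<Rightarrow> nat set" where
  "TW_gens n = {1..<n}"

definition TW_rels :: "nat \<Rightarrow> nat word set" where
  "TW_rels n =
     {gen_word [i, i] | i. i \<in> TW_gens n} \<union>
     {commutator_word i j | i j. i \<in> TW_gens n \<and> j \<in> TW_gens n \<and> (i + 1 < j \<or> j + 1 < i)}"

definition TW :: "nat \<Rightarrow> nat word set monoid" where
  "TW n = presented_group (TW_gens n) (TW_rels n)"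

definition beta_word :: "nat \<Rightarrow> nat \<Rightarrow> nat word" where
  "beta_word p j = gen_word ([j - p..<j] @ [j + 1, j, j + 1, j] @ rev [j - p..<j])"

definition beta :: "nat \<Rightarrow> nat \<Rightarrow> nat \<Rightarrow> nat word set" where
  "beta n p j = pres_class (TW_gens n) (TW_rels n) (beta_word p j)"

text \<open>Abstract generator (p, j) stands for beta_p(j).\<close>

definition comm_gens :: "nat \<Rightarrow> (nat \<times> nat) set" where
  "comm_gens m = {(p, j). p < j \<and> j \<le> m}"

text \<open>Relation a = b is encoded as relator a b^(-1).\<close>

definition comm_rels :: "nat \<Rightarrow> (nat \<times> nat) word set" where
  "comm_rels m =
     {commutator_word (j - k, j) (t - (j + l), t) | j k t l.
        1 \<le> k \<and> k \<le> j \<and> j + 2 \<le> t \<and> t \<le> m \<and> 3 \<le> l \<and> l \<le> t - j} \<union>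
     {[((t - k, t), False)] @
        inv_word [((j - k, j), True), ((t - (j + 1), t), False), ((j - k, j), False)] | j k t.
        1 \<le> k \<and> k \<le> j \<and> j + 2 \<le> t \<and> t \<le> m}"

definition comm_pres :: "nat \<Rightarrow> (nat \<times> nat) word set monoid" where
  "comm_pres m = presented_group (comm_gens m) (comm_rels m)"

end

theory Submission
  imports Defs
begin

text \<open>This is the Reidemeister--Schreier method. Since TW_(m+2) / TW' = (Z/2)^(m+1), a coset of TW' is
  labelled by the set T of generators occurring an odd number of times, with representative
  tau_(k_1) ... tau_(k_r) for T = {k_1 > ... > k_r}. Multiplying this representative on the left by
  tau_i gives the representative for the symmetric difference of T and {i}, followed by nothing if
  i + 1 is not in T and otherwise by beta_p(i) or its inverse, where p counts the consecutive
  elements i - 1, i - 2, ... of T and the exponent is +1 iff i is in T. Reading a word from the right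
  thus rewrites it as a coset label and a word in the beta's. The rewriting respects the relations
  of TW (for tau_i tau_j = tau_j tau_i this needs exactly the two families of relations of the
  presentation) and undoes the substitution of the defining words for the beta's, which in turn
  respects the relations of the presentation. Hence the substitution is an isomorphism onto the
  elements with trivial coset label, that is, onto TW'.\<close>

section \<open>Presented groups\<close>

lemma words_append [simp]: "u @ v \<in> words S \<longleftrightarrow> u \<in> words S \<and> v \<in> words S"
  by (auto simp: words_def)

lemma words_Cons [simp]: "x # v \<in> words S \<longleftrightarrow> fst x \<in> S \<and> v \<in> words S"
  by (auto simp: words_def)

lemma words_Nil [simp]: "[] \<in> words S"
  by (auto simp: words_def)

lemma words_inv_word [simp]: "inv_word u \<in> words S \<longleftrightarrow> u \<in> words S"
  by (auto simp: words_def inv_word_def)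

lemma inv_word_Nil [simp]: "inv_word [] = []"
  by (simp add: inv_word_def)

lemma inv_word_Cons [simp]: "inv_word (x # u) = inv_word u @ [(fst x, \<not> snd x)]"
  by (cases x) (simp add: inv_word_def)

lemma inv_word_append [simp]: "inv_word (u @ v) = inv_word v @ inv_word u"
  by (simp add: inv_word_def)

lemma map_fst_inv_word: "map fst (inv_word w) = rev (map fst w)"
  by (simp add: inv_word_def case_prod_beta rev_map)

lemma pres_eq_words: "pres_eq S R u v \<Longrightarrow> u \<in> words S \<and> v \<in> words S"
  by (induction rule: pres_eq.induct) auto

lemma pres_eq_append_left: "pres_eq S R u v \<Longrightarrow> w \<in> words S \<Longrightarrow> pres_eq S R (w @ u) (w @ v)"
proof (induction rule: pres_eq.induct)
  case (refl x) then show ?case by (simp add: pres_eq.refl)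
next
  case (sym u v) then show ?case by (blast intro: pres_eq.sym)
next
  case (trans u v x) then show ?case by (blast intro: pres_eq.trans)
next
  case (cancel a u v e)
  then show ?case using pres_eq.cancel[of a S "w @ u" v R e] by simp
next
  case (relator r u v)
  then show ?case using pres_eq.relator[of r R S "w @ u" v] by simp
qed

lemma pres_eq_append_right: "pres_eq S R u v \<Longrightarrow> w \<in> words S \<Longrightarrow> pres_eq S R (u @ w) (v @ w)"
proof (induction rule: pres_eq.induct)
  case (refl x) then show ?case by (simp add: pres_eq.refl)
next
  case (sym u v) then show ?case by (blast intro: pres_eq.sym)
next
  case (trans u v x) then show ?case by (blast intro: pres_eq.trans)
next
  case (cancel a u v e)
  then show ?case using pres_eq.cancel[of a S u "v @ w" R e] by simp
next
  case (relator r u v)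
  then show ?case using pres_eq.relator[of r R S u "v @ w"] by simp
qed

lemma pres_eq_append: "pres_eq S R a b \<Longrightarrow> pres_eq S R c d \<Longrightarrow> pres_eq S R (a @ c) (b @ d)"
  by (meson pres_eq.trans pres_eq_append_left pres_eq_append_right pres_eq_words)

lemma pres_eq_inv_word_left: "u \<in> words S \<Longrightarrow> pres_eq S R (inv_word u @ u) []"
proof (induction u)
  case Nil then show ?case by (simp add: pres_eq.refl)
next
  case (Cons x u)
  obtain a e where x: "x = (a, e)" by (cases x)
  have "pres_eq S R (inv_word u @ [(a, \<not> e), (a, \<not> \<not> e)] @ u) (inv_word u @ u)"
    using Cons by (intro pres_eq.cancel) (auto simp: x)
  then show ?case using Cons by (auto simp: x intro: pres_eq.trans)
qed

lemma pres_class_eq: "pres_eq S R u v \<Longrightarrow> pres_class S R u = pres_class S R v"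
  unfolding pres_class_def by (blast intro: pres_eq.sym pres_eq.trans)

lemma pres_class_eqD: "pres_class S R u = pres_class S R v \<Longrightarrow> v \<in> words S \<Longrightarrow> pres_eq S R u v"
  unfolding pres_class_def by (metis mem_Collect_eq pres_eq.refl)

lemma pres_class_eq_iff:
  "u \<in> words S \<Longrightarrow> v \<in> words S \<Longrightarrow> pres_class S R u = pres_class S R v \<longleftrightarrow> pres_eq S R u v"
  using pres_class_eq pres_class_eqD by metis

lemma pres_class_self: "u \<in> words S \<Longrightarrow> u \<in> pres_class S R u"
  by (simp add: pres_class_def pres_eq.refl)

lemma presented_group_carrier: "carrier (presented_group S R) = pres_class S R ` words S"
  by (simp add: presented_group_def)

lemma pres_class_in_carrier: "u \<in> words S \<Longrightarrow> pres_class S R u \<in> carrier (presented_group S R)"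
  by (simp add: presented_group_def)

lemma presented_group_one: "\<one>\<^bsub>presented_group S R\<^esub> = pres_class S R []"
  by (simp add: presented_group_def)

lemma presented_group_mult:
  assumes "u \<in> words S" "v \<in> words S"
  shows "pres_class S R u \<otimes>\<^bsub>presented_group S R\<^esub> pres_class S R v = pres_class S R (u @ v)"
proof -
  have same: "pres_class S R (x @ y) = pres_class S R (u @ v)"
    if "x \<in> pres_class S R u" "y \<in> pres_class S R v" for x y
    using that by (intro pres_class_eq) (auto simp: pres_class_def intro: pres_eq.sym pres_eq_append)
  have "(\<Union>x\<in>pres_class S R u. \<Union>y\<in>pres_class S R v. pres_class S R (x @ y)) = pres_class S R (u @ v)"
  proof
    show "(\<Union>x\<in>pres_class S R u. \<Union>y\<in>pres_class S R v. pres_class S R (x @ y)) \<subseteq> pres_class S R (u @ v)"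
      using same by (intro UN_least) simp
    have "pres_class S R (u @ v) \<subseteq> (\<Union>y\<in>pres_class S R v. pres_class S R (u @ y))"
      by (rule UN_upper[OF pres_class_self[OF assms(2)]])
    also have "\<dots> \<subseteq> (\<Union>x\<in>pres_class S R u. \<Union>y\<in>pres_class S R v. pres_class S R (x @ y))"
      by (rule UN_upper[OF pres_class_self[OF assms(1)]])
    finally show "pres_class S R (u @ v) \<subseteq> \<dots>" .
  qed
  then show ?thesis by (simp add: presented_group_def)
qed

lemma group_presented_group: "group (presented_group S R)"
proof (rule groupI)
  let ?G = "presented_group S R"
  fix x y z assume "x \<in> carrier ?G" "y \<in> carrier ?G" "z \<in> carrier ?G"
  then obtain u v w where "u \<in> words S" "v \<in> words S" "w \<in> words S"
    "x = pres_class S R u" "y = pres_class S R v" "z = pres_class S R w"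
    by (auto simp: presented_group_carrier)
  then show "x \<otimes>\<^bsub>?G\<^esub> y \<in> carrier ?G" "x \<otimes>\<^bsub>?G\<^esub> y \<otimes>\<^bsub>?G\<^esub> z = x \<otimes>\<^bsub>?G\<^esub> (y \<otimes>\<^bsub>?G\<^esub> z)"
    by (simp_all add: presented_group_mult pres_class_in_carrier)
next
  let ?G = "presented_group S R"
  show "\<one>\<^bsub>?G\<^esub> \<in> carrier ?G" by (simp add: presented_group_one pres_class_in_carrier)
  fix x assume "x \<in> carrier ?G"
  then obtain u where u: "u \<in> words S" "x = pres_class S R u" by (auto simp: presented_group_carrier)
  then show "\<one>\<^bsub>?G\<^esub> \<otimes>\<^bsub>?G\<^esub> x = x"
    using presented_group_mult[of "[]" S u R] by (simp add: presented_group_one)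
  have "pres_class S R (inv_word u) \<otimes>\<^bsub>?G\<^esub> x = \<one>\<^bsub>?G\<^esub>"
    using u presented_group_mult[of "inv_word u" S u R] pres_eq_inv_word_left[of u S R]
    by (simp add: presented_group_one pres_class_eq)
  then show "\<exists>y\<in>carrier ?G. y \<otimes>\<^bsub>?G\<^esub> x = \<one>\<^bsub>?G\<^esub>"
    using u pres_class_in_carrier[of "inv_word u" S R] by auto
qed

lemma presented_group_inv:
  assumes "u \<in> words S"
  shows "inv\<^bsub>presented_group S R\<^esub> (pres_class S R u) = pres_class S R (inv_word u)"
proof -
  interpret group "presented_group S R" by (rule group_presented_group)
  show ?thesis
    using assms presented_group_mult[of "inv_word u" S u R] pres_eq_inv_word_left[of u S R]
    by (intro inv_equality) (auto simp: presented_group_one pres_class_in_carrier pres_class_eq)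
qed

lemma pres_class_inv_letter:
  "a \<in> S \<Longrightarrow> pres_class S R [(a, True)] = inv\<^bsub>presented_group S R\<^esub> (pres_class S R [(a, False)])"
  using presented_group_inv[of "[(a, False)]" S R] by (simp add: inv_word_def)

lemma pres_class_Cons:
  assumes "fst x \<in> S" "v \<in> words S" "v \<noteq> []"
  shows "pres_class S R (x # v) =
    (if snd x then inv\<^bsub>presented_group S R\<^esub> (pres_class S R [(fst x, False)])
     else pres_class S R [(fst x, False)]) \<otimes>\<^bsub>presented_group S R\<^esub> pres_class S R v"
  using assms presented_group_mult[of "[x]" S v R] pres_class_inv_letter[of "fst x" S R]
  by (cases x) auto

lemma pres_class_relator:
  "r \<in> R \<Longrightarrow> r \<in> words S \<Longrightarrow> pres_class S R r = \<one>\<^bsub>presented_group S R\<^esub>"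
  using pres_eq.relator[of r R S "[]" "[]"] by (simp add: pres_class_eq presented_group_one)

definition pres_lift :: "('a word \<Rightarrow> 'b) \<Rightarrow> 'a word set \<Rightarrow> 'b" where
  "pres_lift f X = f (SOME x. x \<in> X)"

lemma pres_lift_class:
  assumes "\<And>u v. pres_eq S R u v \<Longrightarrow> f u = f v" and "u \<in> words S"
  shows "pres_lift f (pres_class S R u) = f u"
proof -
  have "(SOME x. x \<in> pres_class S R u) \<in> pres_class S R u"
    using pres_class_self[OF assms(2)] by (rule someI)
  then show ?thesis using assms(1) by (auto simp: pres_lift_def pres_class_def)
qed

lemma pres_lift_iso:
  assumes respects: "\<And>u v. pres_eq S R u v \<Longrightarrow> f u = f v"
    and mult: "\<And>u v. u \<in> words S \<Longrightarrow> v \<in> words S \<Longrightarrow> f (u @ v) = f u \<otimes>\<^bsub>H\<^esub> f v"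
    and image: "f ` words S = carrier H"
    and faithful: "\<And>u v. u \<in> words S \<Longrightarrow> v \<in> words S \<Longrightarrow> f u = f v \<Longrightarrow> pres_eq S R u v"
  shows "pres_lift f \<in> iso (presented_group S R) H"
proof -
  note lift = pres_lift_class[OF respects]
  have "pres_lift f \<in> hom (presented_group S R) H"
    using image by (intro homI) (auto simp: presented_group_carrier presented_group_mult lift mult)
  moreover have "inj_on (pres_lift f) (carrier (presented_group S R))"
    by (rule inj_onI) (auto simp: presented_group_carrier lift intro!: pres_class_eq faithful)
  moreover have "pres_lift f ` carrier (presented_group S R) = carrier H"
    using image by (auto simp: presented_group_carrier lift image_image)
  ultimately show ?thesis by (simp add: iso_def bij_betw_def)
qed

lemma (in group) commutator_one_imp_commute:
  assumes "A \<in> carrier G" "B \<in> carrier G" "A \<otimes> B \<otimes> inv A \<otimes> inv B = \<one>"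
  shows "A \<otimes> B = B \<otimes> A" "inv A \<otimes> B = B \<otimes> inv A" "A \<otimes> inv B = inv B \<otimes> A"
    "inv A \<otimes> inv B = inv B \<otimes> inv A"
proof -
  have "inv (inv A \<otimes> inv B) = A \<otimes> B"
    using assms by (intro inv_equality) (auto simp: m_assoc)
  then show AB: "A \<otimes> B = B \<otimes> A" using assms by (simp add: inv_mult_group)
  have "inv A \<otimes> (A \<otimes> B) \<otimes> inv A = B \<otimes> inv A" using assms by (simp add: m_assoc[symmetric])
  moreover have "inv A \<otimes> (B \<otimes> A) \<otimes> inv A = inv A \<otimes> B" using assms by (simp add: m_assoc)
  ultimately show "inv A \<otimes> B = B \<otimes> inv A" using AB by simp
  have "inv B \<otimes> (A \<otimes> B) \<otimes> inv B = inv B \<otimes> A" using assms by (simp add: m_assoc)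
  moreover have "inv B \<otimes> (B \<otimes> A) \<otimes> inv B = A \<otimes> inv B" using assms by (simp add: m_assoc[symmetric])
  ultimately show "A \<otimes> inv B = inv B \<otimes> A" using AB by simp
  have "inv (A \<otimes> B) = inv (B \<otimes> A)" by (simp add: AB)
  then show "inv A \<otimes> inv B = inv B \<otimes> inv A" using assms by (simp add: inv_mult_group)
qed

lemma (in group) conjugate_relator_consequences:
  assumes "A \<in> carrier G" "B \<in> carrier G" "C \<in> carrier G"
    and "B \<otimes> inv A \<otimes> inv C \<otimes> A = \<one>"
  shows "A \<otimes> B = C \<otimes> A" "A \<otimes> inv B = inv C \<otimes> A"
    "inv A \<otimes> C = B \<otimes> inv A" "inv A \<otimes> inv C = inv B \<otimes> inv A"
proof -
  have "inv (inv A \<otimes> inv C \<otimes> A) = B"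
    using assms by (intro inv_equality) (auto simp: m_assoc)
  then have B: "B = inv A \<otimes> C \<otimes> A"
    using assms by (simp add: inv_mult_group m_assoc)
  show "A \<otimes> B = C \<otimes> A" using assms by (simp add: B m_assoc[symmetric])
  show "A \<otimes> inv B = inv C \<otimes> A" using assms by (simp add: B inv_mult_group m_assoc[symmetric])
  show "inv A \<otimes> C = B \<otimes> inv A" using assms by (simp add: B m_assoc)
  show "inv A \<otimes> inv C = inv B \<otimes> inv A" using assms by (simp add: B inv_mult_group m_assoc)
qed

lemma gen_word_append [simp]: "gen_word (xs @ ys) = gen_word xs @ gen_word ys"
  by (simp add: gen_word_def)

lemma gen_word_Cons [simp]: "gen_word (x # ys) = (x, False) # gen_word ys"
  by (simp add: gen_word_def)

lemma gen_word_Nil [simp]: "gen_word [] = []"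
  by (simp add: gen_word_def)

lemma gen_word_in_words [simp]: "gen_word xs \<in> words S \<longleftrightarrow> set xs \<subseteq> S"
  by (auto simp: gen_word_def words_def)

lemma map_fst_gen_word [simp]: "map fst (gen_word xs) = xs"
  by (induction xs) auto

lemma TW_gens_iff [simp]: "i \<in> TW_gens n \<longleftrightarrow> 1 \<le> i \<and> i < n"
  by (auto simp: TW_gens_def)

lemma set_map_fst_words: "w \<in> words S \<Longrightarrow> set (map fst w) \<subseteq> S"
  by (auto simp: words_def)

definition distant :: "nat \<Rightarrow> nat \<Rightarrow> bool" where
  "distant a b \<longleftrightarrow> a + 1 < b \<or> b + 1 < a"

lemma TW_rels_cases:
  "r \<in> TW_rels n \<Longrightarrow> (\<exists>i. i \<in> TW_gens n \<and> map fst r = [i, i]) \<or>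
     (\<exists>i j. i \<in> TW_gens n \<and> j \<in> TW_gens n \<and> distant i j \<and> map fst r = [i, j, i, j])"
  unfolding TW_rels_def distant_def by (auto simp: gen_word_def commutator_word_def)

text \<open>Every tau_i is an involution, so every element of TW_n is represented by a positive word.\<close>

definition tw_eq :: "nat \<Rightarrow> nat list \<Rightarrow> nat list \<Rightarrow> bool" where
  "tw_eq n xs ys \<longleftrightarrow> pres_eq (TW_gens n) (TW_rels n) (gen_word xs) (gen_word ys)"

abbreviation tw_class :: "nat \<Rightarrow> nat list \<Rightarrow> nat word set" where
  "tw_class n xs \<equiv> pres_class (TW_gens n) (TW_rels n) (gen_word xs)"

lemma tw_eq_refl: "set xs \<subseteq> TW_gens n \<Longrightarrow> tw_eq n xs xs"
  unfolding tw_eq_def by (rule pres_eq.refl) simp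

lemma tw_eq_sym: "tw_eq n xs ys \<Longrightarrow> tw_eq n ys xs"
  unfolding tw_eq_def by (rule pres_eq.sym)

lemma tw_eq_trans [trans]: "tw_eq n xs ys \<Longrightarrow> tw_eq n ys zs \<Longrightarrow> tw_eq n xs zs"
  unfolding tw_eq_def by (rule pres_eq.trans)

lemma tw_eq_append: "tw_eq n a b \<Longrightarrow> tw_eq n c d \<Longrightarrow> tw_eq n (a @ c) (b @ d)"
  unfolding tw_eq_def using pres_eq_append by fastforce

lemma tw_eq_append_left: "tw_eq n a b \<Longrightarrow> set c \<subseteq> TW_gens n \<Longrightarrow> tw_eq n (c @ a) (c @ b)"
  by (rule tw_eq_append[OF tw_eq_refl])

lemma tw_eq_append_right: "tw_eq n a b \<Longrightarrow> set c \<subseteq> TW_gens n \<Longrightarrow> tw_eq n (a @ c) (b @ c)"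
  by (rule tw_eq_append[OF _ tw_eq_refl])

lemma tw_eq_in_context:
  "tw_eq n a b \<Longrightarrow> set c \<subseteq> TW_gens n \<Longrightarrow> set d \<subseteq> TW_gens n \<Longrightarrow> tw_eq n (c @ a @ d) (c @ b @ d)"
  by (rule tw_eq_append_left[OF tw_eq_append_right])

lemma tw_eq_set: "tw_eq n a b \<Longrightarrow> set a \<subseteq> TW_gens n \<and> set b \<subseteq> TW_gens n"
  unfolding tw_eq_def using pres_eq_words by fastforce

lemma tw_class_eq:
  "tw_eq n a b \<Longrightarrow> tw_class n a = tw_class n b"
  unfolding tw_eq_def by (rule pres_class_eq)

lemma tw_eq_involution: "i \<in> TW_gens n \<Longrightarrow> tw_eq n [i, i] []"
proof -
  assume i: "i \<in> TW_gens n"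
  then have "gen_word [i, i] \<in> TW_rels n" by (auto simp: TW_rels_def)
  then have "pres_eq (TW_gens n) (TW_rels n) ([] @ gen_word [i, i] @ []) ([] @ [])"
    using i by (intro pres_eq.relator) auto
  then show ?thesis by (simp add: tw_eq_def)
qed

lemma tw_eq_involution_in_context:
  "i \<in> TW_gens n \<Longrightarrow> set c \<subseteq> TW_gens n \<Longrightarrow> set d \<subseteq> TW_gens n \<Longrightarrow> tw_eq n (c @ [i, i] @ d) (c @ d)"
  using tw_eq_in_context[OF tw_eq_involution[of i n], of c d] by simp

lemma pres_eq_TW_inv_letter: "i \<in> TW_gens n \<Longrightarrow> pres_eq (TW_gens n) (TW_rels n) [(i, True)] [(i, False)]"
proof -
  assume i: "i \<in> TW_gens n"
  then have "gen_word [i, i] \<in> TW_rels n" by (auto simp: TW_rels_def)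
  then have 1: "pres_eq (TW_gens n) (TW_rels n) ([(i, True)] @ gen_word [i, i] @ []) ([(i, True)] @ [])"
    using i by (intro pres_eq.relator) auto
  have 2: "pres_eq (TW_gens n) (TW_rels n)
      ([] @ [(i, True), (i, \<not> True)] @ [(i, False)]) ([] @ [(i, False)])"
    using i by (intro pres_eq.cancel) auto
  show ?thesis using pres_eq.trans[OF pres_eq.sym[OF 1[simplified]] 2[simplified]] by simp
qed

lemma pres_eq_TW_positive_word:
  "w \<in> words (TW_gens n) \<Longrightarrow> pres_eq (TW_gens n) (TW_rels n) w (gen_word (map fst w))"
proof (induction w)
  case Nil then show ?case by (simp add: pres_eq.refl)
next
  case (Cons x w)
  obtain i e where x: "x = (i, e)" by (cases x)
  have "pres_eq (TW_gens n) (TW_rels n) [(i, e)] [(i, False)]"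
    using Cons pres_eq_TW_inv_letter[of i n] by (cases e) (auto simp: x intro: pres_eq.refl)
  then show ?case using pres_eq_append[OF _ Cons.IH, of "[(i, e)]" "[(i, False)]"] Cons by (auto simp: x)
qed

lemma pres_class_TW_positive_word:
  "w \<in> words (TW_gens n) \<Longrightarrow>
     pres_class (TW_gens n) (TW_rels n) w = tw_class n (map fst w)"
  by (rule pres_class_eq[OF pres_eq_TW_positive_word])

lemma TW_inv_tw_class:
  "set xs \<subseteq> TW_gens n \<Longrightarrow>
     inv\<^bsub>TW n\<^esub> (tw_class n xs) = tw_class n (rev xs)"
  unfolding TW_def
  by (simp add: presented_group_inv pres_class_TW_positive_word[of "inv_word (gen_word xs)"]
      map_fst_inv_word)

lemma TW_mult:
  "u \<in> words (TW_gens n) \<Longrightarrow> v \<in> words (TW_gens n) \<Longrightarrow>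
     pres_class (TW_gens n) (TW_rels n) u \<otimes>\<^bsub>TW n\<^esub> pres_class (TW_gens n) (TW_rels n) v
       = pres_class (TW_gens n) (TW_rels n) (u @ v)"
  by (simp add: TW_def presented_group_mult)

lemma TW_carrier_positive_word:
  assumes "g \<in> carrier (TW n)"
  obtains w where "set w \<subseteq> TW_gens n" "g = tw_class n w"
proof -
  obtain u where "u \<in> words (TW_gens n)" "g = pres_class (TW_gens n) (TW_rels n) u"
    using assms by (auto simp: TW_def presented_group_carrier)
  then show ?thesis
    using that[of "map fst u"] set_map_fst_words[of u] pres_class_TW_positive_word[of u] by simp
qed

lemma subgroup_derived_TW: "subgroup (derived (TW n) (carrier (TW n))) (TW n)"
proof -
  interpret group "TW n" unfolding TW_def by (rule group_presented_group)
  show ?thesis by (rule derived_is_subgroup) simp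
qed

lemma TW_commutator_in_derived_set:
  assumes "set a \<subseteq> TW_gens n" "set b \<subseteq> TW_gens n"
  shows "tw_class n (a @ b @ rev a @ rev b)
           \<in> derived_set (TW n) (carrier (TW n))"
proof -
  have "tw_class n a \<otimes>\<^bsub>TW n\<^esub> tw_class n b \<otimes>\<^bsub>TW n\<^esub> inv\<^bsub>TW n\<^esub> tw_class n a
      \<otimes>\<^bsub>TW n\<^esub> inv\<^bsub>TW n\<^esub> tw_class n b = tw_class n (a @ b @ rev a @ rev b)"
    using TW_inv_tw_class[OF assms(1)] TW_inv_tw_class[OF assms(2)] assms
    by (simp add: TW_mult)
  moreover have "tw_class n a \<in> carrier (TW n)" "tw_class n b \<in> carrier (TW n)"
    using assms by (simp_all add: TW_def pres_class_in_carrier)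
  ultimately show ?thesis by blast
qed

lemma tw_eq_commute: "i \<in> TW_gens n \<Longrightarrow> j \<in> TW_gens n \<Longrightarrow> distant i j \<Longrightarrow> tw_eq n [i, j] [j, i]"
proof -
  assume i: "i \<in> TW_gens n" and j: "j \<in> TW_gens n" and ij: "distant i j"
  have "commutator_word i j \<in> TW_rels n"
    using i j ij unfolding TW_rels_def distant_def by blast
  then have "pres_eq (TW_gens n) (TW_rels n) ([] @ commutator_word i j @ []) ([] @ [])"
    using i j by (intro pres_eq.relator) (auto simp: commutator_word_def)
  moreover have "pres_eq (TW_gens n) (TW_rels n) (commutator_word i j) (gen_word [i, j, i, j])"
    using pres_eq_TW_positive_word[of "commutator_word i j" n] i j by (auto simp: commutator_word_def)
  ultimately have "tw_eq n [i, j, i, j] []" unfolding tw_eq_def by (auto intro: pres_eq.sym pres_eq.trans)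
  then have "tw_eq n ([i, j, i, j] @ [j, i]) ([] @ [j, i])"
    using i j by (intro tw_eq_append_right) auto
  moreover have "tw_eq n ([i, j, i] @ [j, j] @ [i]) ([i, j, i] @ [i])"
    using i j by (intro tw_eq_involution_in_context) auto
  moreover have "tw_eq n ([i, j] @ [i, i] @ []) ([i, j] @ [])"
    using i j by (intro tw_eq_involution_in_context) auto
  ultimately show ?thesis by simp (meson tw_eq_sym tw_eq_trans)
qed

lemma tw_eq_commute_lists:
  assumes "set xs \<subseteq> TW_gens n" "set ys \<subseteq> TW_gens n" "\<forall>a\<in>set xs. \<forall>b\<in>set ys. distant a b"
  shows "tw_eq n (xs @ ys) (ys @ xs)"
proof -
  have letter: "tw_eq n (a # ys) (ys @ [a])"
    if "a \<in> TW_gens n" "set ys \<subseteq> TW_gens n" "\<forall>b\<in>set ys. distant a b" for a ys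
    using that
  proof (induction ys)
    case Nil then show ?case by (simp add: tw_eq_refl)
  next
    case (Cons b ys)
    have "tw_eq n ([a, b] @ ys) ([b, a] @ ys)"
      using Cons by (intro tw_eq_append_right tw_eq_commute) auto
    moreover have "tw_eq n ([b] @ (a # ys)) ([b] @ (ys @ [a]))"
      using Cons by (intro tw_eq_append_left) auto
    ultimately show ?case by (auto intro: tw_eq_trans)
  qed
  show ?thesis using assms
  proof (induction xs)
    case Nil then show ?case by (simp add: tw_eq_refl)
  next
    case (Cons a xs)
    have "tw_eq n ([a] @ (xs @ ys)) ([a] @ (ys @ xs))"
      using Cons by (intro tw_eq_append_left) auto
    moreover have "tw_eq n ((a # ys) @ xs) ((ys @ [a]) @ xs)"
      using Cons letter[of a ys] by (intro tw_eq_append_right) auto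
    ultimately show ?case by (auto intro: tw_eq_trans)
  qed
qed

lemma tw_eq_append_rev: "set xs \<subseteq> TW_gens n \<Longrightarrow> tw_eq n (xs @ rev xs) []"
proof (induction xs)
  case Nil then show ?case by (simp add: tw_eq_refl)
next
  case (Cons a xs)
  have "tw_eq n ([a] @ (xs @ rev xs) @ [a]) ([a] @ [] @ [a])"
    using Cons by (intro tw_eq_in_context) auto
  then show ?case using tw_eq_involution[of a n] Cons by (auto intro: tw_eq_trans)
qed

lemma tw_eq_rev_append: "set xs \<subseteq> TW_gens n \<Longrightarrow> tw_eq n (rev xs @ xs) []"
  using tw_eq_append_rev[of "rev xs" n] by simp

lemma tw_eq_append_rev_in_context:
  "set xs \<subseteq> TW_gens n \<Longrightarrow> set c \<subseteq> TW_gens n \<Longrightarrow> set d \<subseteq> TW_gens n \<Longrightarrow> tw_eq n (c @ xs @ rev xs @ d) (c @ d)"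
  using tw_eq_in_context[OF tw_eq_append_rev[of xs n], of c d] by simp

lemma tw_eq_rev_append_in_context:
  "set xs \<subseteq> TW_gens n \<Longrightarrow> set c \<subseteq> TW_gens n \<Longrightarrow> set d \<subseteq> TW_gens n \<Longrightarrow> tw_eq n (c @ rev xs @ xs @ d) (c @ d)"
  using tw_eq_in_context[OF tw_eq_rev_append[of xs n], of c d] by simp

lemma tw_eq_append_left_cancel:
  assumes "tw_eq n (c @ a) (c @ b)" "set c \<subseteq> TW_gens n"
  shows "tw_eq n a b"
proof -
  have gens: "set a \<subseteq> TW_gens n" "set b \<subseteq> TW_gens n" using tw_eq_set[OF assms(1)] by auto
  have "tw_eq n (rev c @ c @ a) (rev c @ c @ b)" using tw_eq_append_left[OF assms(1)] assms(2) by simp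
  then show ?thesis
    using tw_eq_rev_append_in_context[of c n "[]" a] tw_eq_rev_append_in_context[of c n "[]" b] gens assms(2)
    by simp (meson tw_eq_sym tw_eq_trans)
qed

lemma tw_eq_commutator:
  assumes "set a \<subseteq> TW_gens n" "set b \<subseteq> TW_gens n" "tw_eq n (a @ b) (b @ a)"
  shows "tw_eq n (a @ b @ rev a @ rev b) []"
proof -
  have "tw_eq n ((a @ b) @ rev a @ rev b) ((b @ a) @ rev a @ rev b)"
    using tw_eq_append_right[OF assms(3)] assms by simp
  moreover have "tw_eq n (b @ a @ rev a @ rev b) (b @ rev b)"
    using tw_eq_append_rev_in_context[of a n b "rev b"] assms by simp
  ultimately show ?thesis
    using tw_eq_append_rev[of b n] assms by (auto intro: tw_eq_trans)
qed

lemma tw_eq_conjugate: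
  assumes "set a \<subseteq> TW_gens n" "set b \<subseteq> TW_gens n" "set c \<subseteq> TW_gens n" "tw_eq n (a @ b) (c @ a)"
  shows "tw_eq n (b @ rev a @ rev c @ a) []"
proof -
  let ?t = "rev a @ rev c @ a"
  have 1: "tw_eq n (b @ ?t) (rev a @ a @ b @ ?t)"
    using tw_eq_sym[OF tw_eq_rev_append_in_context[of a n "[]" "b @ ?t"]] assms by simp
  have 2: "tw_eq n (rev a @ (a @ b) @ ?t) (rev a @ (c @ a) @ ?t)"
    using tw_eq_in_context[OF assms(4), of "rev a" ?t] assms by simp
  have 3: "tw_eq n ((rev a @ c) @ a @ rev a @ (rev c @ a)) ((rev a @ c) @ rev c @ a)"
    using tw_eq_append_rev_in_context[of a n "rev a @ c" "rev c @ a"] assms by simp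
  have 4: "tw_eq n (rev a @ c @ rev c @ a) (rev a @ a)"
    using tw_eq_append_rev_in_context[of c n "rev a" a] assms by simp
  show ?thesis
    using 1 2 3 4 tw_eq_rev_append[of a n] assms by simp (meson tw_eq_trans)
qed

abbreviation comm_eq :: "nat \<Rightarrow> (nat \<times> nat) word \<Rightarrow> (nat \<times> nat) word \<Rightarrow> bool" where
  "comm_eq m x y \<equiv> pres_eq (comm_gens m) (comm_rels m) x y"

lemma comm_gens_iff [simp]: "(p, j) \<in> comm_gens m \<longleftrightarrow> p < j \<and> j \<le> m"
  by (simp add: comm_gens_def)

text \<open>The relations of comm_rels are indexed by k and l; below they are used in terms of the subscripts
  q = j - k and p = t - (j + l) of the generators involved.\<close>

lemma commutator_word_in_comm_rels:
  assumes "q < i" "i + 2 \<le> j" "j \<le> m" "p + i + 3 \<le> j"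
  shows "commutator_word (q, i) (p, j) \<in> comm_rels m"
  unfolding comm_rels_def using assms
  by (intro UnI1 CollectI exI[of _ i] exI[of _ "i - q"] exI[of _ j] exI[of _ "j - p - i"]) auto

lemma conjugation_word_in_comm_rels:
  assumes "q < i" "i + 2 \<le> j" "j \<le> m"
  shows "[((j - i + q, j), False), ((q, i), True), ((j - i - 1, j), True), ((q, i), False)] \<in> comm_rels m"
  unfolding comm_rels_def using assms
  by (intro UnI2 CollectI exI[of _ i] exI[of _ "i - q"] exI[of _ j]) (auto simp: inv_word_def)

lemma comm_rels_cases:
  assumes "r \<in> comm_rels m"
  obtains (commutator) q i p j where "q < i" "i + 2 \<le> j" "j \<le> m" "p + i + 3 \<le> j"
      "r = commutator_word (q, i) (p, j)"
    | (conjugation) q i j where "q < i" "i + 2 \<le> j" "j \<le> m"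
      "r = [((j - i + q, j), False), ((q, i), True), ((j - i - 1, j), True), ((q, i), False)]"
  using assms unfolding comm_rels_def
proof (elim UnE CollectE exE conjE)
  fix j k t l
  assume "r = commutator_word (j - k, j) (t - (j + l), t)"
    "1 \<le> k" "k \<le> j" "j + 2 \<le> t" "t \<le> m" "3 \<le> l" "l \<le> t - j"
  then show thesis by (intro commutator[where q = "j - k" and i = j and p = "t - (j + l)" and j = t]) auto
next
  fix j k t
  assume r: "r = [((t - k, t), False)] @
      inv_word [((j - k, j), True), ((t - (j + 1), t), False), ((j - k, j), False)]"
    and "1 \<le> k" "k \<le> j" "j + 2 \<le> t" "t \<le> m"
  have "t - k = t - j + (j - k)" using \<open>k \<le> j\<close> \<open>j + 2 \<le> t\<close> by simp
  then have "r =
      [((t - j + (j - k), t), False), ((j - k, j), True), ((t - j - 1, t), True), ((j - k, j), False)]"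
    using r by (simp add: inv_word_def)
  moreover have "j - k < j" using \<open>1 \<le> k\<close> \<open>k \<le> j\<close> by simp
  ultimately show thesis using \<open>j + 2 \<le> t\<close> \<open>t \<le> m\<close> conjugation by blast
qed

lemma comm_eq_commute_letters:
  assumes "q < i" "i + 2 \<le> j" "j \<le> m" "p + i + 3 \<le> j"
  shows "comm_eq m [((q, i), e1), ((p, j), e2)] [((p, j), e2), ((q, i), e1)]"
proof -
  let ?G = "presented_group (comm_gens m) (comm_rels m)"
  interpret G: group ?G by (rule group_presented_group)
  let ?A = "pres_class (comm_gens m) (comm_rels m) [((q, i), False)]"
  let ?B = "pres_class (comm_gens m) (comm_rels m) [((p, j), False)]"
  have AB: "?A \<in> carrier ?G" "?B \<in> carrier ?G" using assms by (auto intro!: pres_class_in_carrier)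
  have gens: "(q, i) \<in> comm_gens m" "(p, j) \<in> comm_gens m" using assms by auto
  have "pres_class (comm_gens m) (comm_rels m) (commutator_word (q, i) (p, j)) = \<one>\<^bsub>?G\<^esub>"
    by (rule pres_class_relator[OF commutator_word_in_comm_rels[OF assms]])
      (use assms in \<open>simp add: commutator_word_def\<close>)
  then have "?A \<otimes>\<^bsub>?G\<^esub> (?B \<otimes>\<^bsub>?G\<^esub> (inv\<^bsub>?G\<^esub> ?A \<otimes>\<^bsub>?G\<^esub> inv\<^bsub>?G\<^esub> ?B)) = \<one>\<^bsub>?G\<^esub>"
    using gens by (simp add: commutator_word_def pres_class_Cons pres_class_inv_letter)
  then have "?A \<otimes>\<^bsub>?G\<^esub> ?B \<otimes>\<^bsub>?G\<^esub> inv\<^bsub>?G\<^esub> ?A \<otimes>\<^bsub>?G\<^esub> inv\<^bsub>?G\<^esub> ?B = \<one>\<^bsub>?G\<^esub>"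
    using AB by (simp add: G.m_assoc)
  note c = G.commutator_one_imp_commute[OF AB this]
  have "pres_class (comm_gens m) (comm_rels m) [((q, i), e1), ((p, j), e2)] =
        pres_class (comm_gens m) (comm_rels m) [((p, j), e2), ((q, i), e1)]"
    using gens AB c by (cases e1; cases e2) (simp_all add: pres_class_Cons pres_class_inv_letter)
  then show ?thesis using gens by (subst pres_class_eq_iff[symmetric]) auto
qed

lemma comm_eq_conjugate_letters:
  assumes "q < i" "i + 2 \<le> j" "j \<le> m"
  shows "comm_eq m [((q, i), False), ((j - i + q, j), e)] [((j - i - 1, j), e), ((q, i), False)]"
        "comm_eq m [((q, i), True), ((j - i - 1, j), e)] [((j - i + q, j), e), ((q, i), True)]"
proof -
  let ?G = "presented_group (comm_gens m) (comm_rels m)"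
  interpret G: group ?G by (rule group_presented_group)
  let ?A = "pres_class (comm_gens m) (comm_rels m) [((q, i), False)]"
  let ?B = "pres_class (comm_gens m) (comm_rels m) [((j - i + q, j), False)]"
  let ?C = "pres_class (comm_gens m) (comm_rels m) [((j - i - 1, j), False)]"
  have gens: "(q, i) \<in> comm_gens m" "(j - i + q, j) \<in> comm_gens m" "(j - i - 1, j) \<in> comm_gens m"
    using assms by auto
  have ABC: "?A \<in> carrier ?G" "?B \<in> carrier ?G" "?C \<in> carrier ?G"
    using gens by (auto intro!: pres_class_in_carrier)
  have "pres_class (comm_gens m) (comm_rels m)
      [((j - i + q, j), False), ((q, i), True), ((j - i - 1, j), True), ((q, i), False)] = \<one>\<^bsub>?G\<^esub>"
    by (rule pres_class_relator[OF conjugation_word_in_comm_rels[OF assms]]) (use assms in simp)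
  then have "?B \<otimes>\<^bsub>?G\<^esub> (inv\<^bsub>?G\<^esub> ?A \<otimes>\<^bsub>?G\<^esub> (inv\<^bsub>?G\<^esub> ?C \<otimes>\<^bsub>?G\<^esub> ?A)) = \<one>\<^bsub>?G\<^esub>"
    using gens by (simp add: pres_class_Cons pres_class_inv_letter del: comm_gens_iff)
  then have "?B \<otimes>\<^bsub>?G\<^esub> inv\<^bsub>?G\<^esub> ?A \<otimes>\<^bsub>?G\<^esub> inv\<^bsub>?G\<^esub> ?C \<otimes>\<^bsub>?G\<^esub> ?A = \<one>\<^bsub>?G\<^esub>"
    using ABC by (simp add: G.m_assoc)
  note c = G.conjugate_relator_consequences[OF ABC(1,2,3) this]
  have "pres_class (comm_gens m) (comm_rels m) [((q, i), False), ((j - i + q, j), e)] =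
        pres_class (comm_gens m) (comm_rels m) [((j - i - 1, j), e), ((q, i), False)]"
    using gens ABC c by (cases e) (simp_all add: pres_class_Cons pres_class_inv_letter del: comm_gens_iff)
  then show "comm_eq m [((q, i), False), ((j - i + q, j), e)] [((j - i - 1, j), e), ((q, i), False)]"
    using gens by (subst pres_class_eq_iff[symmetric]) auto
  have "pres_class (comm_gens m) (comm_rels m) [((q, i), True), ((j - i - 1, j), e)] =
        pres_class (comm_gens m) (comm_rels m) [((j - i + q, j), e), ((q, i), True)]"
    using gens ABC c by (cases e) (simp_all add: pres_class_Cons pres_class_inv_letter del: comm_gens_iff)
  then show "comm_eq m [((q, i), True), ((j - i - 1, j), e)] [((j - i + q, j), e), ((q, i), True)]"
    using gens by (subst pres_class_eq_iff[symmetric]) auto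
qed

definition beta_list :: "nat \<Rightarrow> nat \<Rightarrow> nat list" where
  "beta_list p j = [j - p..<j] @ [j + 1, j, j + 1, j] @ rev [j - p..<j]"

lemma beta_word_eq: "beta_word p j = gen_word (beta_list p j)"
  by (simp add: beta_word_def beta_list_def)

lemma set_beta_list: "set (beta_list p j) = {j - p..<j} \<union> {j, j + 1}"
  by (auto simp: beta_list_def)

lemma beta_list_gens: "p < j \<Longrightarrow> j \<le> m \<Longrightarrow> set (beta_list p j) \<subseteq> TW_gens (m + 2)"
  by (auto simp: set_beta_list)

lemma beta_list_Suc: "Suc q \<le> i \<Longrightarrow> beta_list (Suc q) i = [i - Suc q] @ beta_list q i @ [i - Suc q]"
proof -
  assume a: "Suc q \<le> i"
  have "[i - Suc q..<i] = (i - Suc q) # [i - q..<i]"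
    using a by (simp add: upt_conv_Cons Suc_diff_Suc)
  then show ?thesis by (simp add: beta_list_def)
qed

fun beta_expand :: "(nat \<times> nat) word \<Rightarrow> nat list" where
  "beta_expand [] = []"
| "beta_expand (((p, j), e) # x) = (if e then rev (beta_list p j) else beta_list p j) @ beta_expand x"

lemma beta_expand_append: "beta_expand (x @ y) = beta_expand x @ beta_expand y"
  by (induction x rule: beta_expand.induct) auto

lemma beta_expand_gens: "x \<in> words (comm_gens m) \<Longrightarrow> set (beta_expand x) \<subseteq> TW_gens (m + 2)"
proof (induction x rule: beta_expand.induct)
  case 1 then show ?case by simp
next
  case (2 p j e x) then show ?case using beta_list_gens[of p j m] by auto
qed

fun run_below :: "nat set \<Rightarrow> nat \<Rightarrow> nat" where
  "run_below T 0 = 0"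
| "run_below T (Suc k) = (if k \<in> T then Suc (run_below T k) else 0)"

lemma run_below_less: "0 \<notin> T \<Longrightarrow> 0 < k \<Longrightarrow> run_below T k < k"
proof (induction k)
  case 0 then show ?case by simp
next
  case (Suc k) then show ?case by (cases k) auto
qed

lemma run_below_cong: "(\<And>x. x < k \<Longrightarrow> x \<in> T \<longleftrightarrow> x \<in> T') \<Longrightarrow> run_below T k = run_below T' k"
  by (induction k) auto

lemma run_below_eqI: "(\<And>x. k - r \<le> x \<Longrightarrow> x < k \<Longrightarrow> x \<in> T) \<Longrightarrow> r \<le> k \<Longrightarrow> (r < k \<Longrightarrow> k - r - 1 \<notin> T)
   \<Longrightarrow> run_below T k = r"
proof (induction r arbitrary: k)
  case 0 then show ?case by (cases k) auto
next
  case (Suc r)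
  then obtain k' where k: "k = Suc k'" by (cases k) auto
  have "k' \<in> T" using Suc.prems k by auto
  moreover have "run_below T k' = r" using Suc.prems k by (intro Suc.IH) auto
  ultimately show ?case by (simp add: k)
qed

lemma run_below_gap: "k < j \<Longrightarrow> k \<notin> T \<Longrightarrow> k \<notin> T' \<Longrightarrow> (\<And>x. k < x \<Longrightarrow> x < j \<Longrightarrow> x \<in> T \<longleftrightarrow> x \<in> T')
   \<Longrightarrow> run_below T j = run_below T' j"
proof (induction j)
  case 0 then show ?case by simp
next
  case (Suc j)
  show ?case
  proof (cases "k = j")
    case True then show ?thesis using Suc.prems by simp
  next
    case False then show ?thesis using Suc by auto
  qed
qed

lemma run_below_gap_bound: "k < j \<Longrightarrow> k \<notin> T \<Longrightarrow> run_below T j + k < j"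
proof (induction j)
  case 0 then show ?case by simp
next
  case (Suc j)
  show ?case
  proof (cases "k = j")
    case True then show ?thesis using Suc.prems by simp
  next
    case False then show ?thesis using Suc by auto
  qed
qed

lemma run_below_no_gap: "i < j \<Longrightarrow> (\<And>x. i < x \<Longrightarrow> x < j \<Longrightarrow> x \<in> T)
   \<Longrightarrow> run_below T j = (j - i - 1) + (if i \<in> T then Suc (run_below T i) else 0)"
proof (induction j)
  case 0 then show ?case by simp
next
  case (Suc j)
  show ?case
  proof (cases "i = j")
    case True then show ?thesis by simp
  next
    case False
    then have "i < j" using Suc.prems by simp
    then have "run_below T j = (j - i - 1) + (if i \<in> T then Suc (run_below T i) else 0)"
      using Suc by auto
    moreover have "j \<in> T" using Suc.prems \<open>i < j\<close> by auto
    ultimately show ?thesis using \<open>i < j\<close> by simp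
  qed
qed

definition flip :: "nat set \<Rightarrow> nat \<Rightarrow> nat set" where
  "flip T i = (if i \<in> T then T - {i} else insert i T)"

lemma flip_mem [simp]: "x \<in> flip T i \<longleftrightarrow> (if x = i then i \<notin> T else x \<in> T)"
  by (auto simp: flip_def)

lemma flip_commute: "i \<noteq> j \<Longrightarrow> flip (flip T j) i = flip (flip T i) j"
  by (auto simp: flip_def)

definition coset_label :: "nat \<Rightarrow> nat set \<Rightarrow> bool" where
  "coset_label m T \<longleftrightarrow> T \<subseteq> {1..m+1}"

lemma coset_label_flip: "coset_label m T \<Longrightarrow> 1 \<le> i \<Longrightarrow> i \<le> m + 1 \<Longrightarrow> coset_label m (flip T i)"
  by (auto simp: coset_label_def flip_def)

lemma coset_label_zero: "coset_label m T \<Longrightarrow> 0 \<notin> T"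
  by (auto simp: coset_label_def)

definition desc_list :: "nat set \<Rightarrow> nat \<Rightarrow> nat \<Rightarrow> nat list" where
  "desc_list T a b = filter (\<lambda>k. k \<in> T) (rev [a..<b])"

lemma set_desc_list: "set (desc_list T a b) \<subseteq> {x. a \<le> x \<and> x < b \<and> x \<in> T}"
  by (auto simp: desc_list_def)

lemma desc_list_Suc: "desc_list T a (Suc k) = (if a \<le> k \<and> k \<in> T then [k] else []) @ desc_list T a k"
  by (auto simp: desc_list_def)

lemma desc_list_empty: "b \<le> a \<Longrightarrow> desc_list T a b = []"
  by (auto simp: desc_list_def)

lemma desc_list_split:
  "a \<le> i \<Longrightarrow> i < b \<Longrightarrow>
     desc_list T a b = desc_list T (Suc i) b @ (if i \<in> T then [i] else []) @ desc_list T a i"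
proof -
  assume a: "a \<le> i" "i < b"
  have "[a..<b] = [a..<i] @ [i] @ [Suc i..<b]"
  proof -
    have "[a..<b] = [a..<i] @ [i..<i + (b - i)]" using a upt_add_eq_append[of a i "b - i"] by simp
    also have "[i..<i + (b - i)] = i # [Suc i..<b]" using a by (simp add: upt_conv_Cons)
    finally show ?thesis by simp
  qed
  then show ?thesis by (simp add: desc_list_def)
qed

lemma desc_list_cong: "(\<And>x. a \<le> x \<Longrightarrow> x < b \<Longrightarrow> x \<in> T \<longleftrightarrow> x \<in> T') \<Longrightarrow> desc_list T a b = desc_list T' a b"
  unfolding desc_list_def by (rule filter_cong) auto

definition coset_rep :: "nat \<Rightarrow> nat set \<Rightarrow> nat list" where
  "coset_rep m T = desc_list T 1 (m + 2)"

lemma coset_rep_gens: "set (coset_rep m T) \<subseteq> TW_gens (m + 2)"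
  using set_desc_list[of T 1 "m+2"] by (auto simp: coset_rep_def)

section \<open>The Reidemeister--Schreier rewriting process\<close>

definition rs_letter :: "nat set \<Rightarrow> nat \<Rightarrow> (nat \<times> nat) word" where
  "rs_letter T i = (if Suc i \<in> T then [((run_below T i, i), i \<notin> T)] else [])"

lemma rs_letter_in_words: "coset_label m T \<Longrightarrow> 1 \<le> i \<Longrightarrow> rs_letter T i \<in> words (comm_gens m)"
proof -
  assume a: "coset_label m T" "1 \<le> i"
  then have "0 \<notin> T" by (auto simp: coset_label_def)
  then show ?thesis using a run_below_less[of T i] by (auto simp: rs_letter_def coset_label_def words_def)
qed

lemma rs_letter_flip_distant: "i + 2 \<le> j \<Longrightarrow> rs_letter (flip T j) i = rs_letter T i"
proof -
  assume a: "i + 2 \<le> j"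
  have "run_below (flip T j) i = run_below T i" by (rule run_below_cong) (use a in auto)
  then show ?thesis using a by (auto simp: rs_letter_def)
qed

fun rs_rewrite :: "nat list \<Rightarrow> nat set \<times> (nat \<times> nat) word \<Rightarrow> nat set \<times> (nat \<times> nat) word" where
  "rs_rewrite [] pt = pt"
| "rs_rewrite (i # w) pt = (case rs_rewrite w pt of (T, x) \<Rightarrow> (flip T i, rs_letter T i @ x))"

lemma rs_rewrite_valid: "coset_label m T \<Longrightarrow> set w \<subseteq> TW_gens (m + 2) \<Longrightarrow> x \<in> words (comm_gens m) \<Longrightarrow>
   coset_label m (fst (rs_rewrite w (T, x))) \<and> snd (rs_rewrite w (T, x)) \<in> words (comm_gens m)"
proof (induction w)
  case Nil then show ?case by simp
next
  case (Cons i w)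
  obtain T' x' where "rs_rewrite w (T, x) = (T', x')" by (cases "rs_rewrite w (T, x)")
  then show ?case using Cons rs_letter_in_words[of m T' i] coset_label_flip[of m T' i] by auto
qed

lemma rs_rewrite_append: "rs_rewrite (u @ v) pt = rs_rewrite u (rs_rewrite v pt)"
  by (induction u) auto

lemma rs_rewrite_split:
  "rs_rewrite w (T, x) = (fst (rs_rewrite w (T, [])), snd (rs_rewrite w (T, [])) @ x)"
proof (induction w)
  case Nil then show ?case by simp
next
  case (Cons i w)
  then show ?case by (auto split: prod.splits)
qed

definition rs_state_eq :: "nat \<Rightarrow> nat set \<times> (nat \<times> nat) word \<Rightarrow> nat set \<times> (nat \<times> nat) word \<Rightarrow> bool" where
  "rs_state_eq m pt pt' \<longleftrightarrow> fst pt = fst pt' \<and> comm_eq m (snd pt) (snd pt')"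

lemma rs_state_eq_sym: "rs_state_eq m a b \<Longrightarrow> rs_state_eq m b a"
  by (auto simp: rs_state_eq_def intro: pres_eq.sym)

lemma rs_state_eq_trans [trans]: "rs_state_eq m a b \<Longrightarrow> rs_state_eq m b c \<Longrightarrow> rs_state_eq m a c"
  by (auto simp: rs_state_eq_def intro: pres_eq.trans)

lemma rs_state_eq_refl: "snd a \<in> words (comm_gens m) \<Longrightarrow> rs_state_eq m a a"
  by (auto simp: rs_state_eq_def intro: pres_eq.refl)

lemma rs_rewrite_cong:
  "rs_state_eq m pt pt' \<Longrightarrow> coset_label m (fst pt) \<Longrightarrow> set u \<subseteq> TW_gens (m + 2) \<Longrightarrow>
     rs_state_eq m (rs_rewrite u pt) (rs_rewrite u pt')"
proof -
  assume a: "rs_state_eq m pt pt'" "coset_label m (fst pt)" "set u \<subseteq> TW_gens (m + 2)"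
  obtain T x where pt: "pt = (T, x)" by (cases pt)
  obtain x' where pt': "pt' = (T, x')" using a pt by (cases pt') (auto simp: rs_state_eq_def)
  have e: "comm_eq m x x'" using a pt pt' by (simp add: rs_state_eq_def)
  have w: "snd (rs_rewrite u (T, [])) \<in> words (comm_gens m)" using rs_rewrite_valid[of m T u "[]"] a pt by simp
  show ?thesis
    using pres_eq_append_left[OF e w] rs_rewrite_split[of u T x] rs_rewrite_split[of u T x'] pt pt'
    by (simp add: rs_state_eq_def)
qed

lemma rs_rewrite_involution:
  "coset_label m T \<Longrightarrow> i \<in> TW_gens (m + 2) \<Longrightarrow> x \<in> words (comm_gens m) \<Longrightarrow>
     rs_state_eq m (rs_rewrite [i, i] (T, x)) (T, x)"
proof -
  assume a: "coset_label m T" "i \<in> TW_gens (m + 2)" "x \<in> words (comm_gens m)"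
  have ff: "flip (flip T i) i = T" by (auto simp: flip_def)
  have r: "run_below (flip T i) i = run_below T i" by (rule run_below_cong) auto
  show ?thesis
  proof (cases "Suc i \<in> T")
    case False
    then show ?thesis using a by (auto simp: rs_letter_def ff rs_state_eq_def intro: pres_eq.refl)
  next
    case True
    have ws: "rs_letter T i \<in> words (comm_gens m)" using rs_letter_in_words[of m T i] a by simp
    have "comm_eq m ([] @ [((run_below T i, i), i \<in> T), ((run_below T i, i), \<not> (i \<in> T))] @ x) ([] @ x)"
      using ws a True by (intro pres_eq.cancel) (auto simp: rs_letter_def)
    then show ?thesis using True r by (auto simp: rs_letter_def ff rs_state_eq_def)
  qed
qed

text \<open>If some k strictly between i and j is missing from T, the two letters involve indices far apart
  and commute by the first family of relations; otherwise the run below j reaches down to i, and the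
  second family applies.\<close>

lemma rs_letter_commute_gap:
  assumes v: "coset_label m T" and i: "1 \<le> i" and k: "i < k" "k < j" "k \<notin> T"
    and si: "Suc i \<in> T" and sj: "Suc j \<in> T"
  shows "comm_eq m (rs_letter T i @ rs_letter T j) (rs_letter (flip T i) j @ rs_letter T i)"
proof -
  have ik: "i + 2 \<le> k" using k si by (cases "k = Suc i") auto
  have ij: "i + 2 \<le> j" and jm: "j \<le> m" using ik k sj v by (auto simp: coset_label_def)
  have q: "run_below T i < i" using run_below_less[OF coset_label_zero[OF v]] i by simp
  have "run_below (flip T i) j = run_below T j"
    by (rule run_below_gap[of k]) (use k in auto)
  moreover have "run_below T j + i + 3 \<le> j" using run_below_gap_bound[of k j T] k ik by simp
  ultimately show ?thesis
    using comm_eq_commute_letters[OF q ij jm, of "run_below T j" "i \<notin> T" "j \<notin> T"] si sj ij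
    by (simp add: rs_letter_def)
qed

lemma rs_letter_commute_no_gap:
  assumes v: "coset_label m T" and i: "1 \<le> i" and ij: "i + 2 \<le> j"
    and no_gap: "\<And>x. i < x \<Longrightarrow> x < j \<Longrightarrow> x \<in> T" and sj: "Suc j \<in> T"
  shows "comm_eq m (rs_letter T i @ rs_letter T j) (rs_letter (flip T i) j @ rs_letter T i)"
proof -
  let ?q = "run_below T i"
  have q: "?q < i" using run_below_less[OF coset_label_zero[OF v]] i by simp
  have jm: "j \<le> m" using sj v by (auto simp: coset_label_def)
  have si: "Suc i \<in> T" using no_gap ij by simp
  have "run_below (flip T i) i = ?q" by (rule run_below_cong) auto
  then have runs: "run_below T j = (j - i - 1) + (if i \<in> T then Suc ?q else 0)"
    "run_below (flip T i) j = (j - i - 1) + (if i \<in> T then 0 else Suc ?q)"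
    using run_below_no_gap[of i j T] run_below_no_gap[of i j "flip T i"] no_gap ij by auto
  have "j - i - 1 + Suc ?q = j - i + ?q" using ij by simp
  then show ?thesis
    using comm_eq_conjugate_letters[OF q ij jm, of "j \<notin> T"] si sj ij runs
    by (cases "i \<in> T") (simp_all add: rs_letter_def)
qed

lemma rs_letter_commute:
  assumes v: "coset_label m T" and i: "1 \<le> i" and ij: "i + 2 \<le> j" and j: "j \<le> m + 1"
  shows "comm_eq m (rs_letter T i @ rs_letter T j) (rs_letter (flip T i) j @ rs_letter T i)"
proof (cases "Suc i \<in> T \<and> Suc j \<in> T")
  case False
  then consider "Suc i \<notin> T" | "Suc j \<notin> T" by blast
  then show ?thesis
  proof cases
    case 1
    have "run_below (flip T i) j = run_below T j"
      by (rule run_below_gap[of "Suc i"]) (use 1 ij in auto)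
    then show ?thesis
      using 1 ij rs_letter_in_words[OF v, of j] i by (auto simp: rs_letter_def intro: pres_eq.refl)
  next
    case 2
    then show ?thesis
      using ij rs_letter_in_words[OF v i] by (auto simp: rs_letter_def intro: pres_eq.refl)
  qed
next
  case True
  show ?thesis
  proof (cases "\<exists>k. i < k \<and> k < j \<and> k \<notin> T")
    case True
    then show ?thesis using rs_letter_commute_gap[OF v i] \<open>Suc i \<in> T \<and> Suc j \<in> T\<close> by blast
  next
    case False
    then show ?thesis using rs_letter_commute_no_gap[OF v i ij] \<open>Suc i \<in> T \<and> Suc j \<in> T\<close> by blast
  qed
qed

lemma rs_rewrite_commute_less:
  assumes v: "coset_label m T" and i: "1 \<le> i" and ij: "i + 2 \<le> j" and j: "j \<le> m + 1"
    and x: "x \<in> words (comm_gens m)"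
  shows "rs_state_eq m (rs_rewrite [i, j] (T, x)) (rs_rewrite [j, i] (T, x))"
proof -
  have "comm_eq m ((rs_letter T i @ rs_letter T j) @ x) ((rs_letter (flip T i) j @ rs_letter T i) @ x)"
    using rs_letter_commute[OF assms(1-4)] x by (rule pres_eq_append_right)
  then show ?thesis using rs_letter_flip_distant[OF ij, of T] flip_commute[of i j T] ij
    by (simp add: rs_state_eq_def)
qed

lemma rs_rewrite_commute:
  assumes v: "coset_label m T" and i: "i \<in> TW_gens (m + 2)" and j: "j \<in> TW_gens (m + 2)" and f: "distant i j"
    and x: "x \<in> words (comm_gens m)"
  shows "rs_state_eq m (rs_rewrite [i, j] (T, x)) (rs_rewrite [j, i] (T, x))"
  using f unfolding distant_def
proof
  assume "i + 1 < j" then show ?thesis using rs_rewrite_commute_less[OF v _ _ _ x, of i j] i j by simp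
next
  assume "j + 1 < i"
  then show ?thesis using rs_rewrite_commute_less[OF v _ _ _ x, of j i] i j by (simp add: rs_state_eq_sym)
qed

lemma rs_rewrite_delete:
  assumes trivial: "\<And>S y. coset_label m S \<Longrightarrow> y \<in> words (comm_gens m) \<Longrightarrow>
      rs_state_eq m (rs_rewrite r (S, y)) (S, y)"
    and T: "coset_label m T" and x: "x \<in> words (comm_gens m)"
    and gens: "set u \<subseteq> TW_gens (m + 2)" "set r \<subseteq> TW_gens (m + 2)" "set w \<subseteq> TW_gens (m + 2)"
  shows "rs_state_eq m (rs_rewrite (u @ r @ w) (T, x)) (rs_rewrite (u @ w) (T, x))"
proof -
  obtain S y where Sy: "rs_rewrite w (T, x) = (S, y)" by (cases "rs_rewrite w (T, x)")
  have S: "coset_label m S" "y \<in> words (comm_gens m)" using rs_rewrite_valid[OF T gens(3) x] Sy by auto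
  have "rs_state_eq m (rs_rewrite u (rs_rewrite r (S, y))) (rs_rewrite u (S, y))"
    using rs_rewrite_valid[OF S(1) gens(2) S(2)] by (intro rs_rewrite_cong trivial S gens(1)) auto
  then show ?thesis by (simp add: rs_rewrite_append Sy)
qed

lemma rs_rewrite_commutator:
  assumes T: "coset_label m T" and i: "i \<in> TW_gens (m + 2)" and j: "j \<in> TW_gens (m + 2)"
    and f: "distant i j" and x: "x \<in> words (comm_gens m)"
  shows "rs_state_eq m (rs_rewrite [i, j, i, j] (T, x)) (T, x)"
proof -
  have "coset_label m (fst (rs_rewrite [i, j] (T, x)))"
    using rs_rewrite_valid[OF T _ x, of "[i, j]"] i j by simp
  then have "rs_state_eq m (rs_rewrite [i, j] (rs_rewrite [i, j] (T, x)))
      (rs_rewrite [i, j] (rs_rewrite [j, i] (T, x)))"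
    using i j by (intro rs_rewrite_cong rs_rewrite_commute[OF T i j f x]) auto
  also have "rs_rewrite [i, j] (rs_rewrite [j, i] (T, x)) = rs_rewrite ([i] @ [j, j] @ [i]) (T, x)"
    by (simp add: rs_rewrite_append[symmetric])
  also have "rs_state_eq m \<dots> (rs_rewrite ([i] @ [i]) (T, x))"
    using i j rs_rewrite_involution[of m _ j] by (intro rs_rewrite_delete T x) auto
  also have "rs_state_eq m \<dots> (T, x)"
    using rs_rewrite_involution[OF T i x] by simp
  finally show ?thesis by (simp add: rs_rewrite_append[symmetric])
qed

lemma rs_rewrite_respects:
  "pres_eq (TW_gens (m + 2)) (TW_rels (m + 2)) w w' \<Longrightarrow> coset_label m T \<Longrightarrow> x \<in> words (comm_gens m) \<Longrightarrow>
   rs_state_eq m (rs_rewrite (map fst w) (T, x)) (rs_rewrite (map fst w') (T, x))"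
proof (induction arbitrary: T x rule: pres_eq.induct)
  case (refl w)
  then show ?case
    using rs_rewrite_valid[of m T "map fst w" x] set_map_fst_words[of w] by (intro rs_state_eq_refl) auto
next
  case (sym u v) then show ?case by (blast intro: rs_state_eq_sym)
next
  case (trans u v w) then show ?case by (blast intro: rs_state_eq_trans)
next
  case (cancel a u v e)
  then show ?case
    using rs_rewrite_delete[of m "[a, a]" T x "map fst u" "map fst v"] rs_rewrite_involution[of m _ a]
      set_map_fst_words[of u] set_map_fst_words[of v]
    by auto
next
  case (relator r u v)
  have "rs_state_eq m (rs_rewrite (map fst r) (S, y)) (S, y)"
    if "coset_label m S" "y \<in> words (comm_gens m)" for S y
    using TW_rels_cases[OF relator(1)] rs_rewrite_involution[OF that(1) _ that(2)]
      rs_rewrite_commutator[OF that(1) _ _ _ that(2)]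
    by auto
  then show ?case
    using rs_rewrite_delete[of m "map fst r" T x "map fst u" "map fst v"] relator
      set_map_fst_words[of u] set_map_fst_words[of r] set_map_fst_words[of v]
    by auto
qed

lemma rs_rewrite_rev_upt: "1 \<le> a \<Longrightarrow> rs_rewrite (rev [a..<b]) ({}, z) = ({a..<b}, z)"
proof (induction b)
  case 0 then show ?case by simp
next
  case (Suc b)
  show ?case
  proof (cases "a \<le> b")
    case False then show ?thesis by simp
  next
    case True
    have "flip {a..<b} b = {a..<Suc b}" using True by (auto simp: flip_def)
    moreover have "rs_letter {a..<b} b = []" by (simp add: rs_letter_def)
    ultimately show ?thesis using Suc True by simp
  qed
qed

lemma rs_rewrite_upt: "rs_rewrite [a..<b] ({a..<b}, z) = ({}, z)"
proof (induction b)
  case 0 then show ?case by simp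
next
  case (Suc b)
  show ?case
  proof (cases "a \<le> b")
    case False then show ?thesis by simp
  next
    case True
    have "rs_rewrite [b] ({a..<Suc b}, z) = ({a..<b}, z)"
      using True by (auto simp: flip_def rs_letter_def)
    then show ?thesis using Suc True by (simp add: rs_rewrite_append)
  qed
qed

lemma rs_rewrite_beta_core:
  assumes "p < j"
  shows "rs_rewrite [j + 1, j, j + 1, j] ({j - p..<j}, z) = ({j - p..<j}, [((p, j), False)] @ z)"
proof -
  let ?B = "{j - p..<j}"
  have s1: "flip ?B j = {j - p..<Suc j}" by (auto simp: flip_def)
  have s2: "flip {j - p..<Suc j} (Suc j) = {j - p..<Suc (Suc j)}" by (auto simp: flip_def)
  have s3: "flip {j - p..<Suc (Suc j)} j = insert (Suc j) ?B" by (auto simp: flip_def)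
  have s4: "flip (insert (Suc j) ?B) (Suc j) = ?B" by (auto simp: flip_def)
  have r: "run_below {j - p..<Suc (Suc j)} j = p"
    by (rule run_below_eqI) (use assms in auto)
  show ?thesis using s1 s2 s3 s4 r by (simp add: rs_letter_def)
qed

lemma rs_rewrite_beta_core_inv:
  assumes "p < j"
  shows "rs_rewrite [j, j + 1, j, j + 1] ({j - p..<j}, z) = ({j - p..<j}, [((p, j), True)] @ z)"
proof -
  let ?B = "{j - p..<j}"
  have s1: "flip ?B (Suc j) = insert (Suc j) ?B" by (auto simp: flip_def)
  have s2: "flip (insert (Suc j) ?B) j = {j - p..<Suc (Suc j)}" by (auto simp: flip_def)
  have s3: "flip {j - p..<Suc (Suc j)} (Suc j) = {j - p..<Suc j}" by (auto simp: flip_def)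
  have s4: "flip {j - p..<Suc j} j = ?B" by (auto simp: flip_def)
  have r: "run_below (insert (Suc j) ?B) j = p"
    by (rule run_below_eqI) (use assms in auto)
  show ?thesis using s1 s2 s3 s4 r by (simp add: rs_letter_def)
qed

lemma rs_rewrite_beta_list: "p < j \<Longrightarrow> rs_rewrite (beta_list p j) ({}, z) = ({}, [((p, j), False)] @ z)"
  unfolding beta_list_def rs_rewrite_append
  using rs_rewrite_rev_upt[of "j - p" j z] rs_rewrite_beta_core[of p j z] rs_rewrite_upt[of "j - p" j] by simp

lemma rs_rewrite_rev_beta_list: "p < j \<Longrightarrow> rs_rewrite (rev (beta_list p j)) ({}, z) = ({}, [((p, j), True)] @ z)"
  unfolding beta_list_def
  using rs_rewrite_rev_upt[of "j - p" j z] rs_rewrite_beta_core_inv[of p j z] rs_rewrite_upt[of "j - p" j]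
  by (simp add: rs_rewrite_append)

lemma rs_rewrite_beta_expand: "x \<in> words (comm_gens m) \<Longrightarrow> rs_rewrite (beta_expand x) ({}, y) = ({}, x @ y)"
proof (induction x rule: beta_expand.induct)
  case 1 then show ?case by simp
next
  case (2 p j e x)
  then show ?case
    using rs_rewrite_beta_list[of p j] rs_rewrite_rev_beta_list[of p j] by (auto simp: rs_rewrite_append)
qed

section \<open>The relations hold in the twin group\<close>

lemma tw_eq_beta_list_desc_list:
  assumes "0 \<notin> T" "q + k = i" "0 < k" "i \<le> m"
  shows "tw_eq (m + 2) (beta_list q i @ desc_list T 1 k) (desc_list T 1 k @ beta_list (q + run_below T k) i)"
  using assms
proof (induction k arbitrary: q)
  case 0 then show ?case by simp
next
  case (Suc k)
  have beta: "set (beta_list q i) \<subseteq> TW_gens (m + 2)" using beta_list_gens[of q i m] Suc.prems by simp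
  have desc: "set (desc_list T 1 k) \<subseteq> TW_gens (m + 2)" using set_desc_list[of T 1 k] Suc.prems by auto
  show ?case
  proof (cases "k \<in> T")
    case True
    moreover have "k \<noteq> 0" using True Suc.prems(1) by (cases k) auto
    ultimately have k: "0 < k" "k \<in> TW_gens (m + 2)" using Suc.prems by auto
    have "beta_list (Suc q) i = [k] @ beta_list q i @ [k]"
      using beta_list_Suc[of q i] Suc.prems by (simp add: Suc_diff_Suc)
    then have "tw_eq (m + 2) (beta_list q i @ [k] @ desc_list T 1 k)
        ([k] @ beta_list (Suc q) i @ desc_list T 1 k)"
      using tw_eq_involution_in_context[of k "m + 2" "[]" "beta_list q i @ [k] @ desc_list T 1 k"] k beta desc
      by (auto intro: tw_eq_sym)
    moreover have "tw_eq (m + 2) ([k] @ beta_list (Suc q) i @ desc_list T 1 k)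
        ([k] @ desc_list T 1 k @ beta_list (Suc q + run_below T k) i)"
      using Suc.IH[of "Suc q"] Suc.prems k by (intro tw_eq_append_left) auto
    ultimately show ?thesis using True k by (simp add: desc_list_Suc) (rule tw_eq_trans)
  next
    case False
    have "\<forall>a\<in>set (beta_list q i). \<forall>b\<in>set (desc_list T 1 k). distant a b"
      using set_desc_list[of T 1 k] Suc.prems by (auto simp: set_beta_list distant_def)
    then show ?thesis using tw_eq_commute_lists[OF beta desc] False by (simp add: desc_list_Suc)
  qed
qed

lemma coset_rep_mem:
  assumes "i \<in> T" "1 \<le> i" "i < m + 2"
  shows "coset_rep m T = desc_list T (Suc i) (m + 2) @ [i] @ desc_list T 1 i"
    and "coset_rep m (flip T i) = desc_list T (Suc i) (m + 2) @ desc_list T 1 i"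
proof -
  show "coset_rep m T = desc_list T (Suc i) (m + 2) @ [i] @ desc_list T 1 i"
    using desc_list_split[of 1 i "m + 2" T] assms by (simp add: coset_rep_def)
  have "desc_list (flip T i) (Suc i) (m + 2) = desc_list T (Suc i) (m + 2)"
    "desc_list (flip T i) 1 i = desc_list T 1 i"
    by (rule desc_list_cong; simp)+
  then show "coset_rep m (flip T i) = desc_list T (Suc i) (m + 2) @ desc_list T 1 i"
    using desc_list_split[of 1 i "m + 2" "flip T i"] assms by (simp add: coset_rep_def)
qed

lemma tw_eq_letter_coset_rep_mem:
  assumes v: "coset_label m T" and iT: "i \<in> T"
  shows "tw_eq (m + 2) (i # coset_rep m T) (coset_rep m (flip T i) @ beta_expand (rs_letter T i))"
proof -
  have i: "1 \<le> i" "i < m + 2" "i \<in> TW_gens (m + 2)" using v iT by (auto simp: coset_label_def)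
  let ?U = "desc_list T (Suc i) (m + 2)" and ?L = "desc_list T 1 i"
  have L: "set ?L \<subseteq> TW_gens (m + 2)" using set_desc_list[of T 1 i] i by auto
  note rep = coset_rep_mem[OF iT i(1,2)]
  show ?thesis
  proof (cases "Suc i \<in> T")
    case False
    have "Suc i < b" if "b \<in> set ?U" for b
    proof -
      have "Suc i \<le> b" "b \<in> T" using set_desc_list[of T "Suc i" "m + 2"] that by auto
      then show ?thesis using False by (cases "b = Suc i") auto
    qed
    then have U: "set ?U \<subseteq> TW_gens (m + 2)" "\<forall>a\<in>set [i]. \<forall>b\<in>set ?U. distant a b"
      using set_desc_list[of T "Suc i" "m + 2"] by (auto simp: distant_def)
    have "tw_eq (m + 2) ([i] @ ?U @ [i] @ ?L) (?U @ [i] @ [i] @ ?L)"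
      using tw_eq_append_right[OF tw_eq_commute_lists[OF _ U], of "[i] @ ?L"] i L by simp
    moreover have "tw_eq (m + 2) (?U @ [i, i] @ ?L) (?U @ ?L)"
      by (rule tw_eq_involution_in_context[OF i(3) U(1) L])
    ultimately show ?thesis using rep False by (simp add: rs_letter_def) (rule tw_eq_trans)
  next
    case True
    have im: "i \<le> m" using True v by (auto simp: coset_label_def)
    let ?U2 = "desc_list T (Suc (Suc i)) (m + 2)"
    have U: "?U = ?U2 @ [Suc i]"
      using desc_list_split[of "Suc i" "Suc i" "m + 2" T] True im desc_list_empty[of "Suc i" "Suc i" T] by simp
    have U2: "set ?U2 \<subseteq> TW_gens (m + 2)" "\<forall>a\<in>set [i]. \<forall>b\<in>set ?U2. distant a b"
      using set_desc_list[of T "Suc (Suc i)" "m + 2"] by (auto simp: distant_def)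
    have si: "Suc i \<in> TW_gens (m + 2)" using im by simp
    have "tw_eq (m + 2) ([i] @ ?U2 @ [Suc i, i] @ ?L) (?U2 @ [i, Suc i, i] @ ?L)"
      using tw_eq_append_right[OF tw_eq_commute_lists[OF _ U2], of "[Suc i, i] @ ?L"] i L si by simp
    moreover have "tw_eq (m + 2) (?U2 @ [i, Suc i, i] @ ?L) (?U2 @ [Suc i] @ beta_list 0 i @ ?L)"
      using tw_eq_sym[OF tw_eq_involution_in_context[OF si, of ?U2 "[i, Suc i, i] @ ?L"]] U2 L i si
      by (simp add: beta_list_def)
    moreover have "tw_eq (m + 2) (?U2 @ [Suc i] @ beta_list 0 i @ ?L)
        (?U2 @ [Suc i] @ ?L @ beta_list (run_below T i) i)"
      using tw_eq_beta_list_desc_list[OF coset_label_zero[OF v], of 0 i i m] i im U2 si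
      by (intro tw_eq_append_left) auto
    ultimately show ?thesis using rep U True iT by (simp add: rs_letter_def) (meson tw_eq_trans)
  qed
qed

lemma tw_eq_letter_coset_rep:
  assumes T: "coset_label m T" and i: "i \<in> TW_gens (m + 2)"
  shows "tw_eq (m + 2) (i # coset_rep m T) (coset_rep m (flip T i) @ beta_expand (rs_letter T i))"
proof (cases "i \<in> T")
  case True
  then show ?thesis using tw_eq_letter_coset_rep_mem[OF T True] by simp
next
  case False
  let ?T = "insert i T"
  let ?b = "beta_expand (rs_letter ?T i)"
  have T': "coset_label m ?T" using T i by (auto simp: coset_label_def)
  have flips: "flip ?T i = T" "flip T i = ?T" using False by (auto simp: flip_def)
  have "run_below ?T i = run_below T i" by (rule run_below_cong) auto
  then have letter: "beta_expand (rs_letter T i) = rev ?b" using False by (auto simp: rs_letter_def)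
  have gens: "set ?b \<subseteq> TW_gens (m + 2)" "set (coset_rep m T) \<subseteq> TW_gens (m + 2)"
    "set (coset_rep m ?T) \<subseteq> TW_gens (m + 2)"
    using beta_expand_gens[OF rs_letter_in_words[OF T'], of i] i coset_rep_gens by auto
  have "tw_eq (m + 2) ([i] @ coset_rep m T) ([i] @ coset_rep m T @ ?b @ rev ?b)"
    using tw_eq_sym[OF tw_eq_append_rev_in_context[of ?b "m + 2" "[i] @ coset_rep m T" "[]"]] gens i
    by simp
  also have "tw_eq (m + 2) \<dots> ([i] @ (i # coset_rep m ?T) @ rev ?b)"
    using tw_eq_in_context[OF tw_eq_sym[OF tw_eq_letter_coset_rep_mem[OF T' insertI1]], of "[i]" "rev ?b"]
      flips gens i
    by simp
  also have "tw_eq (m + 2) \<dots> (coset_rep m ?T @ rev ?b)"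
    using tw_eq_involution_in_context[OF i, of "[]" "coset_rep m ?T @ rev ?b"] gens by simp
  finally show ?thesis using flips letter by simp
qed

lemma tw_eq_rs_rewrite:
  assumes T: "coset_label m T" and w: "set w \<subseteq> TW_gens (m + 2)" and x: "x \<in> words (comm_gens m)"
  shows "tw_eq (m + 2) (w @ coset_rep m T @ beta_expand x)
    (coset_rep m (fst (rs_rewrite w (T, x))) @ beta_expand (snd (rs_rewrite w (T, x))))"
  using w
proof (induction w)
  case Nil
  show ?case using coset_rep_gens beta_expand_gens[OF x] by (simp add: tw_eq_refl)
next
  case (Cons i w)
  obtain S y where Sy: "rs_rewrite w (T, x) = (S, y)" by (cases "rs_rewrite w (T, x)")
  have S: "coset_label m S" "y \<in> words (comm_gens m)" using rs_rewrite_valid[OF T _ x, of w] Cons Sy by auto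
  have i: "i \<in> TW_gens (m + 2)" using Cons by simp
  have "tw_eq (m + 2) ([i] @ w @ coset_rep m T @ beta_expand x) ([i] @ coset_rep m S @ beta_expand y)"
    using Cons Sy i by (intro tw_eq_append_left) auto
  also have "tw_eq (m + 2) \<dots> ((coset_rep m (flip S i) @ beta_expand (rs_letter S i)) @ beta_expand y)"
    using tw_eq_append_right[OF tw_eq_letter_coset_rep[OF S(1) i]] beta_expand_gens[OF S(2)] by simp
  finally show ?case using Sy by (simp add: beta_expand_append)
qed

lemma tw_eq_rs_letters_commute:
  assumes v: "coset_label m T" and i: "i \<in> TW_gens (m + 2)" and j: "j \<in> TW_gens (m + 2)" and ij: "i + 2 \<le> j"
  shows "tw_eq (m + 2) (beta_expand (rs_letter (flip T j) i @ rs_letter T j))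
    (beta_expand (rs_letter (flip T i) j @ rs_letter T i))"
proof -
  let ?rep = "coset_rep m (flip (flip T j) i)"
  have "tw_eq (m + 2) (?rep @ beta_expand (rs_letter (flip T j) i @ rs_letter T j))
      ([i, j] @ coset_rep m T)"
    using tw_eq_sym[OF tw_eq_rs_rewrite[OF v _ words_Nil, of "[i, j]"]] i j by simp
  moreover have "tw_eq (m + 2) ([i, j] @ coset_rep m T) ([j, i] @ coset_rep m T)"
    using i j ij coset_rep_gens by (intro tw_eq_append_right tw_eq_commute) (auto simp: distant_def)
  moreover have "tw_eq (m + 2) ([j, i] @ coset_rep m T)
      (?rep @ beta_expand (rs_letter (flip T i) j @ rs_letter T i))"
    using tw_eq_rs_rewrite[OF v _ words_Nil, of "[j, i]"] i j flip_commute[of i j T] ij by simp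
  ultimately show ?thesis
    using coset_rep_gens by (meson tw_eq_trans tw_eq_append_left_cancel)
qed

lemma tw_eq_beta_commute:
  assumes "q < i" "i + 2 \<le> j" "j \<le> m" "p + i + 3 \<le> j"
  shows "tw_eq (m + 2) (beta_list q i @ beta_list p j) (beta_list p j @ beta_list q i)"
proof -
  let ?T = "{i - q..<i + 2} \<union> {j - p..<j + 2}"
  have v: "coset_label m ?T" using assms by (auto simp: coset_label_def)
  have iG: "i \<in> TW_gens (m + 2)" "j \<in> TW_gens (m + 2)" using assms by auto
  have r1: "run_below (flip ?T j) i = q" by (rule run_below_eqI) (use assms in auto)
  have r2: "run_below ?T j = p" by (rule run_below_eqI) (use assms in auto)
  have r3: "run_below (flip ?T i) j = p" by (rule run_below_eqI) (use assms in auto)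
  have r4: "run_below ?T i = q" by (rule run_below_eqI) (use assms in auto)
  have "Suc i \<in> ?T" "Suc j \<in> ?T" "i \<in> ?T" "j \<in> ?T" using assms by auto
  then show ?thesis
    using tw_eq_rs_letters_commute[OF v iG assms(2)] r1 r2 r3 r4 assms by (simp add: rs_letter_def)
qed

lemma tw_eq_beta_conjugate:
  assumes "q < i" "i + 2 \<le> j" "j \<le> m"
  shows "tw_eq (m + 2) (beta_list q i @ beta_list (j - i + q) j) (beta_list (j - i - 1) j @ beta_list q i)"
proof -
  let ?T = "{i - q..<j + 2}"
  have v: "coset_label m ?T" using assms by (auto simp: coset_label_def)
  have iG: "i \<in> TW_gens (m + 2)" "j \<in> TW_gens (m + 2)" using assms by auto
  have r1: "run_below (flip ?T j) i = q" by (rule run_below_eqI) (use assms in auto)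
  have r2: "run_below ?T j = j - i + q" by (rule run_below_eqI) (use assms in auto)
  have r3: "run_below (flip ?T i) j = j - i - 1" by (rule run_below_eqI) (use assms in auto)
  have r4: "run_below ?T i = q" by (rule run_below_eqI) (use assms in auto)
  have "Suc i \<in> ?T" "Suc j \<in> ?T" "i \<in> ?T" "j \<in> ?T" using assms by auto
  then show ?thesis
    using tw_eq_rs_letters_commute[OF v iG assms(2)] r1 r2 r3 r4 assms by (simp add: rs_letter_def)
qed

lemma tw_eq_beta_expand_relator:
  assumes "r \<in> comm_rels m"
  shows "tw_eq (m + 2) (beta_expand r) []"
  using assms
proof (cases rule: comm_rels_cases)
  case (commutator q i p j)
  then have "tw_eq (m + 2) (beta_list q i @ beta_list p j @ rev (beta_list q i) @ rev (beta_list p j)) []"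
    by (intro tw_eq_commutator beta_list_gens tw_eq_beta_commute) auto
  then show ?thesis using commutator by (simp add: commutator_word_def)
next
  case (conjugation q i j)
  then have "tw_eq (m + 2)
      (beta_list (j - i + q) j @ rev (beta_list q i) @ rev (beta_list (j - i - 1) j) @ beta_list q i) []"
    by (intro tw_eq_conjugate beta_list_gens tw_eq_beta_conjugate) auto
  then show ?thesis using conjugation by simp
qed

lemma tw_eq_beta_expand_respects: "comm_eq m x y \<Longrightarrow> tw_eq (m + 2) (beta_expand x) (beta_expand y)"
proof (induction rule: pres_eq.induct)
  case (refl w) then show ?case by (intro tw_eq_refl beta_expand_gens)
next
  case (sym u v) show ?case using sym.IH by (rule tw_eq_sym)
next
  case (trans u v w) show ?case using trans.IH by (rule tw_eq_trans)
next
  case (cancel a u v e)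
  obtain p j where a: "a = (p, j)" by (cases a)
  have bG: "set (beta_list p j) \<subseteq> TW_gens (m + 2)" using cancel a by (intro beta_list_gens) auto
  have uv: "set (beta_expand u) \<subseteq> TW_gens (m + 2)" "set (beta_expand v) \<subseteq> TW_gens (m + 2)"
    using beta_expand_gens[of u m] beta_expand_gens[of v m] cancel by auto
  show ?case
  proof (cases e)
    case True
    then show ?thesis using tw_eq_rev_append_in_context[OF bG uv] a by (simp add: beta_expand_append)
  next
    case False
    then show ?thesis using tw_eq_append_rev_in_context[OF bG uv] a by (simp add: beta_expand_append)
  qed
next
  case (relator r u v)
  have uv: "set (beta_expand u) \<subseteq> TW_gens (m + 2)" "set (beta_expand v) \<subseteq> TW_gens (m + 2)"
    using beta_expand_gens[of u m] beta_expand_gens[of v m] relator by auto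
  show ?case
    using tw_eq_in_context[OF tw_eq_beta_expand_relator[OF relator(1)] uv] by (simp add: beta_expand_append)
qed

definition rs_coset :: "nat list \<Rightarrow> nat set" where
  "rs_coset w = fst (rs_rewrite w ({}, []))"

lemma flip_sym_diff: "flip (sym_diff T B) i = sym_diff T (flip B i)"
  by (auto simp: flip_def)

lemma fst_rs_rewrite: "fst (rs_rewrite w (T, x)) = sym_diff T (rs_coset w)"
proof (induction w)
  case Nil then show ?case by (simp add: rs_coset_def)
next
  case (Cons i w)
  have "fst (rs_rewrite (i # w) pt) = flip (fst (rs_rewrite w pt)) i" for pt
    by (cases "rs_rewrite w pt") simp
  then show ?case using Cons by (simp add: rs_coset_def flip_sym_diff)
qed

lemma rs_coset_append: "rs_coset (u @ v) = sym_diff (rs_coset v) (rs_coset u)"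
  unfolding rs_coset_def rs_rewrite_append
  by (metis fst_rs_rewrite prod.collapse rs_coset_def)

lemma rs_coset_rev: "rs_coset (rev u) = rs_coset u"
proof (induction u)
  case Nil then show ?case by simp
next
  case (Cons i u)
  then show ?case using rs_coset_append[of "rev u" "[i]"] rs_coset_append[of "[i]" u] by auto
qed

lemma rs_coset_commutator: "rs_coset (a @ b @ rev a @ rev b) = {}"
  by (auto simp: rs_coset_append rs_coset_rev)

lemma derived_set_TW_trivial_coset:
  assumes "h \<in> derived_set (TW n) (carrier (TW n))"
  shows "\<exists>w. set w \<subseteq> TW_gens n \<and> h = tw_class n w \<and> rs_coset w = {}"
proof -
  obtain g1 g2 where g: "g1 \<in> carrier (TW n)" "g2 \<in> carrier (TW n)"
    "h = g1 \<otimes>\<^bsub>TW n\<^esub> g2 \<otimes>\<^bsub>TW n\<^esub> inv\<^bsub>TW n\<^esub> g1 \<otimes>\<^bsub>TW n\<^esub> inv\<^bsub>TW n\<^esub> g2"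
    using assms by blast
  obtain u v where "set u \<subseteq> TW_gens n" "set v \<subseteq> TW_gens n"
    "g1 = tw_class n u" "g2 = tw_class n v"
    using TW_carrier_positive_word[OF g(1)] TW_carrier_positive_word[OF g(2)] by metis
  then show ?thesis using g(3) rs_coset_commutator[of u v]
    by (intro exI[of _ "u @ v @ rev u @ rev v"]) (simp add: TW_inv_tw_class TW_mult)
qed

lemma derived_TW_trivial_coset:
  assumes "g \<in> derived (TW n) (carrier (TW n))"
  shows "\<exists>w. set w \<subseteq> TW_gens n \<and> g = tw_class n w \<and> rs_coset w = {}"
  using assms unfolding derived_def
proof (induction rule: generate.induct)
  case one
  show ?case by (intro exI[of _ "[]"]) (simp add: TW_def presented_group_one rs_coset_def)
next
  case (incl h)
  then show ?case by (rule derived_set_TW_trivial_coset)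
next
  case (inv h)
  then obtain w where "set w \<subseteq> TW_gens n" "h = tw_class n w" "rs_coset w = {}"
    using derived_set_TW_trivial_coset by blast
  then show ?case by (intro exI[of _ "rev w"]) (simp add: TW_inv_tw_class rs_coset_rev)
next
  case (eng h1 h2)
  then obtain w1 w2 where "set w1 \<subseteq> TW_gens n" "h1 = tw_class n w1" "rs_coset w1 = {}"
    "set w2 \<subseteq> TW_gens n" "h2 = tw_class n w2" "rs_coset w2 = {}"
    by blast
  then show ?case by (intro exI[of _ "w1 @ w2"]) (simp add: TW_mult rs_coset_append)
qed

text \<open>beta_p(j) = A B A B with the palindromes A = L tau_(j+1) rev L and B = L tau_j rev L;
  as A and B are involutions, this is their commutator.\<close>

lemma tw_eq_beta_list_commutator:
  assumes "p < j" "j \<le> m"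
  defines "A \<equiv> [j - p..<j] @ [j + 1] @ rev [j - p..<j]" and "B \<equiv> [j - p..<j] @ [j] @ rev [j - p..<j]"
  shows "tw_eq (m + 2) (A @ B @ rev A @ rev B) (beta_list p j)"
proof -
  let ?L = "[j - p..<j]"
  have gens: "set ?L \<subseteq> TW_gens (m + 2)" "j \<in> TW_gens (m + 2)" "j + 1 \<in> TW_gens (m + 2)"
    using assms by auto
  have 1: "tw_eq (m + 2) ((?L @ [j + 1]) @ rev ?L @ ?L @ ([j] @ rev ?L @ ?L @ [j + 1] @ rev ?L @ ?L @ [j] @ rev ?L))
      ((?L @ [j + 1]) @ ([j] @ rev ?L @ ?L @ [j + 1] @ rev ?L @ ?L @ [j] @ rev ?L))"
    using gens by (intro tw_eq_rev_append_in_context) auto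
  have 2: "tw_eq (m + 2) ((?L @ [j + 1, j]) @ rev ?L @ ?L @ ([j + 1] @ rev ?L @ ?L @ [j] @ rev ?L))
      ((?L @ [j + 1, j]) @ ([j + 1] @ rev ?L @ ?L @ [j] @ rev ?L))"
    using gens by (intro tw_eq_rev_append_in_context) auto
  have 3: "tw_eq (m + 2) ((?L @ [j + 1, j, j + 1]) @ rev ?L @ ?L @ ([j] @ rev ?L))
      ((?L @ [j + 1, j, j + 1]) @ ([j] @ rev ?L))"
    using gens by (intro tw_eq_rev_append_in_context) auto
  show ?thesis
    using tw_eq_trans[OF tw_eq_trans[OF 1[simplified] 2[simplified]] 3[simplified]]
    by (simp add: A_def B_def beta_list_def)
qed

lemma beta_in_derived:
  assumes "p < j" "j \<le> m"
  shows "tw_class (m + 2) (beta_list p j)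
           \<in> derived (TW (m + 2)) (carrier (TW (m + 2)))"
proof -
  let ?A = "[j - p..<j] @ [j + 1] @ rev [j - p..<j]" and ?B = "[j - p..<j] @ [j] @ rev [j - p..<j]"
  have "set ?A \<subseteq> TW_gens (m + 2)" "set ?B \<subseteq> TW_gens (m + 2)" using assms by auto
  then have "tw_class (m + 2) (?A @ ?B @ rev ?A @ rev ?B)
      \<in> derived_set (TW (m + 2)) (carrier (TW (m + 2)))"
    by (rule TW_commutator_in_derived_set)
  then show ?thesis
    using tw_class_eq[OF tw_eq_beta_list_commutator[OF assms]]
    unfolding derived_def by (auto intro: generate.incl)
qed

lemma beta_expand_in_derived:
  "x \<in> words (comm_gens m) \<Longrightarrow> tw_class (m + 2) (beta_expand x) \<in> derived (TW (m + 2)) (carrier (TW (m + 2)))"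
proof (induction x rule: beta_expand.induct)
  case 1
  show ?case
    using subgroup.one_closed[OF subgroup_derived_TW] by (simp add: TW_def presented_group_one)
next
  case (2 p j e x)
  note sub = subgroup_derived_TW[of "m + 2"]
  have pj: "p < j" "j \<le> m" using 2 by auto
  then have beta: "tw_class (m + 2) (beta_list p j) \<in> derived (TW (m + 2)) (carrier (TW (m + 2)))"
    by (rule beta_in_derived)
  have "tw_class (m + 2) (if e then rev (beta_list p j) else beta_list p j)
      \<in> derived (TW (m + 2)) (carrier (TW (m + 2)))"
    using beta subgroup.m_inv_closed[OF sub beta] TW_inv_tw_class[OF beta_list_gens[OF pj]]
    by auto
  moreover have "tw_class (m + 2) (beta_expand (((p, j), e) # x)) =
      tw_class (m + 2) (if e then rev (beta_list p j) else beta_list p j) \<otimes>\<^bsub>TW (m + 2)\<^esub>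
      tw_class (m + 2) (beta_expand x)"
    using TW_mult beta_list_gens[OF pj] beta_expand_gens[of x m] 2 by simp
  ultimately show ?case using subgroup.m_closed[OF sub] 2 by simp
qed

lemma derived_subset_beta_expand:
  assumes "g \<in> derived (TW (m + 2)) (carrier (TW (m + 2)))"
  obtains x where "x \<in> words (comm_gens m)"
    "g = tw_class (m + 2) (beta_expand x)"
proof -
  obtain w where w: "set w \<subseteq> TW_gens (m + 2)" "g = tw_class (m + 2) w"
    "rs_coset w = {}"
    using derived_TW_trivial_coset[OF assms] by blast
  have empty: "coset_label m {}" by (simp add: coset_label_def)
  then have x: "snd (rs_rewrite w ({}, [])) \<in> words (comm_gens m)"
    using rs_rewrite_valid[OF _ w(1)] by simp
  have "fst (rs_rewrite w ({}, [])) = {}" using w(3) by (simp add: rs_coset_def)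
  then have "tw_eq (m + 2) w (beta_expand (snd (rs_rewrite w ({}, []))))"
    using tw_eq_rs_rewrite[OF empty w(1), of "[]"] by (simp add: coset_rep_def desc_list_def)
  then show ?thesis using that x w(2) tw_class_eq by metis
qed

lemma tw_class_beta_expand_image:
  "(\<lambda>x. tw_class (m + 2) (beta_expand x)) ` words (comm_gens m)
     = derived (TW (m + 2)) (carrier (TW (m + 2)))"
    (is "?image = ?derived")
proof
  show "?image \<subseteq> ?derived" using beta_expand_in_derived by auto
  show "?derived \<subseteq> ?image"
  proof
    fix g assume "g \<in> ?derived"
    then obtain x where "x \<in> words (comm_gens m)" "g = tw_class (m + 2) (beta_expand x)"
      by (rule derived_subset_beta_expand)
    then show "g \<in> ?image" by blast
  qed
qed

lemma beta_expand_faithful: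
  assumes "x \<in> words (comm_gens m)" "y \<in> words (comm_gens m)"
    and "tw_eq (m + 2) (beta_expand x) (beta_expand y)"
  shows "comm_eq m x y"
proof -
  have "rs_state_eq m (rs_rewrite (beta_expand x) ({}, [])) (rs_rewrite (beta_expand y) ({}, []))"
    using assms(3) rs_rewrite_respects[of m "gen_word (beta_expand x)" "gen_word (beta_expand y)" "{}" "[]"]
    by (simp add: tw_eq_def coset_label_def)
  then show ?thesis
    using rs_rewrite_beta_expand[OF assms(1), of "[]"] rs_rewrite_beta_expand[OF assms(2), of "[]"]
    by (simp add: rs_state_eq_def)
qed

theorem theorem1p1:
  fixes m :: nat
  assumes "1 \<le> m"
  shows "\<exists>\<phi>. \<phi> \<in> iso (comm_pres m)
              ((TW (m + 2)) \<lparr> carrier := derived (TW (m + 2)) (carrier (TW (m + 2))) \<rparr>)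
           \<and> (\<forall>p j. p < j \<and> j \<le> m \<longrightarrow>
                 \<phi> (pres_class (comm_gens m) (comm_rels m) [((p, j), False)]) = beta (m + 2) p j)"
proof -
  let ?H = "(TW (m + 2)) \<lparr> carrier := derived (TW (m + 2)) (carrier (TW (m + 2))) \<rparr>"
  define f where "f = (\<lambda>x. tw_class (m + 2) (beta_expand x))"
  have respects: "f u = f v" if "comm_eq m u v" for u v
    unfolding f_def using that by (intro tw_class_eq tw_eq_beta_expand_respects)
  have mult: "f (u @ v) = f u \<otimes>\<^bsub>?H\<^esub> f v" if "u \<in> words (comm_gens m)" "v \<in> words (comm_gens m)" for u v
    using that TW_mult beta_expand_gens by (simp add: f_def beta_expand_append)
  have image: "f ` words (comm_gens m) = carrier ?H"
    using tw_class_beta_expand_image[of m] by (simp add: f_def)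
  have faithful: "comm_eq m u v" if "u \<in> words (comm_gens m)" "v \<in> words (comm_gens m)" "f u = f v" for u v
    using that beta_expand_gens[of v m]
    by (intro beta_expand_faithful) (auto simp: f_def tw_eq_def dest: pres_class_eqD)
  have "pres_lift f \<in> iso (comm_pres m) ?H"
    unfolding comm_pres_def by (rule pres_lift_iso[OF respects mult image faithful])
  moreover have "pres_lift f (pres_class (comm_gens m) (comm_rels m) [((p, j), False)]) = beta (m + 2) p j"
    if "p < j" "j \<le> m" for p j
    using that pres_lift_class[OF respects, where u = "[((p, j), False)]"]
    by (simp add: f_def beta_def beta_word_eq)
  ultimately show ?thesis by blast
qed

end
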